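(* Let $X$ be an irreducible positive recurrent Markov chain on a countable state space $S$ with transition matrix $P$ and stationary distribution $\pi$. Fix a finite nonempty $K\subseteq S$ and finite sets $A_n\supseteq K$ with $A_n\nearrow S$. For each $n$ let $T_n=\inf\{j\ge1:X_j\notin A_n\}$, $T_K=\inf\{j\ge1:X_j\in K\}$, and assume the matrix $G_n(x,y)=P_x(X_{T_K}=y,\,T_K<T_n)$, $x,y\in K$, is irreducible. Let $u_n(x)=P_x(T_K<T_n)$ for $x\in A_n$, $S_n'=\{x\in A_n:u_n(x)>0\}$, and define the stochastic matrix $R_n$ on $S_n'$ by $R_n(x,y)=P(x,y)/u_n(x)$ for $x\in S_n'$, $y\in K$, and $R_n(x,y)=P(x,y)u_n(y)/u_n(x)$ for $x\in S'_n$, $y\in S'_n\setminus K$. Let $S_n''\supseteq K$ be the unique closed communicating class of $R_n$, and let $\pi^*_{3n}$ be the unique stationary distribution of $R_n$ restricted to $S_n''$, extended to $S$ by $\pi^*_{3n}(x)=0$ for $x\notin S_n''$. Then for each $x\in S$, $\pi^*_{3n}(x)\to\pi(x)$ as $n\to\infty$.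
   Context: $P_x$ denotes the law of the chain started at $x$. Under the irreducibility of $G_n$, $S_n'$ contains a single closed communicating class of $R_n$, which contains $K$, and $R_n$ restricted to it is irreducible; $R_n$ describes the dynamics of $X$ conditioned on $T_K<T_n$. *)

theory Defs
  imports "HOL-Analysis.Analysis"
begin

definition stochastic :: "('a \<Rightarrow> 'a \<Rightarrow> real) \<Rightarrow> bool" where
  "stochastic P \<longleftrightarrow> (\<forall>x y. P x y \<ge> 0) \<and> (\<forall>x. (P x has_sum 1) UNIV)"

definition irreducible_chain :: "('a \<Rightarrow> 'a \<Rightarrow> real) \<Rightarrow> bool" where
  "irreducible_chain P \<longleftrightarrow> (\<forall>x y. (x, y) \<in> {(a, b). P a b > 0}\<^sup>*)"

text \<open>Taboo probabilities: taboo P B j x y = P_x(X_j = y, X_i \<in> B for 1 <= i < j), j >= 1;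
  taboo P B 0 x y = 0.\<close>
fun taboo :: "('a \<Rightarrow> 'a \<Rightarrow> real) \<Rightarrow> 'a set \<Rightarrow> nat \<Rightarrow> 'a \<Rightarrow> 'a \<Rightarrow> real" where
  "taboo P B 0 x y = 0"
| "taboo P B (Suc 0) x y = P x y"
| "taboo P B (Suc (Suc j)) x y = infsum (\<lambda>z. P x z * taboo P B (Suc j) z y) B"

definition first_return :: "('a \<Rightarrow> 'a \<Rightarrow> real) \<Rightarrow> nat \<Rightarrow> 'a \<Rightarrow> real" where
  "first_return P j x = taboo P (UNIV - {x}) j x x"

text \<open>Positive recurrence: every state is recurrent (P_x(T_x < inf) = 1) and E_x[T_x] < inf.\<close>
definition positive_recurrent :: "('a \<Rightarrow> 'a \<Rightarrow> real) \<Rightarrow> bool" where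
  "positive_recurrent P \<longleftrightarrow>
     (\<forall>x. (\<lambda>j. first_return P j x) sums 1 \<and> summable (\<lambda>j. real j * first_return P j x))"

definition stationary_distribution :: "('a \<Rightarrow> 'a \<Rightarrow> real) \<Rightarrow> ('a \<Rightarrow> real) \<Rightarrow> bool" where
  "stationary_distribution P \<pi> \<longleftrightarrow> (\<forall>x. \<pi> x \<ge> 0) \<and> (\<pi> has_sum 1) UNIV \<and>
     (\<forall>y. ((\<lambda>x. \<pi> x * P x y) has_sum \<pi> y) UNIV)"

text \<open>G_n(x,y) = P_x(X_{T_K} = y, T_K < T_n) for y in K, where A is the finite set A_n.
  The event {X_{T_K} = y, T_K < T_n} is the disjoint union over j >= 1 of
  {X_j = y, X_i \<in> A - K for 1 <= i < j}.\<close>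
definition Gmat :: "('a \<Rightarrow> 'a \<Rightarrow> real) \<Rightarrow> 'a set \<Rightarrow> 'a set \<Rightarrow> 'a \<Rightarrow> 'a \<Rightarrow> real" where
  "Gmat P K A x y = (if y \<in> K then (\<Sum>j. taboo P (A - K) j x y) else 0)"

definition uhit :: "('a \<Rightarrow> 'a \<Rightarrow> real) \<Rightarrow> 'a set \<Rightarrow> 'a set \<Rightarrow> 'a \<Rightarrow> real" where
  "uhit P K A x = (\<Sum>y\<in>K. Gmat P K A x y)"

definition irreducible_on :: "'a set \<Rightarrow> ('a \<Rightarrow> 'a \<Rightarrow> real) \<Rightarrow> bool" where
  "irreducible_on K G \<longleftrightarrow> (\<forall>x\<in>K. \<forall>y\<in>K. (x, y) \<in> {(a, b). a \<in> K \<and> b \<in> K \<and> G a b > 0}\<^sup>+)"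

definition Sprime :: "('a \<Rightarrow> 'a \<Rightarrow> real) \<Rightarrow> 'a set \<Rightarrow> 'a set \<Rightarrow> 'a set" where
  "Sprime P K A = {x \<in> A. uhit P K A x > 0}"

definition Rmat :: "('a \<Rightarrow> 'a \<Rightarrow> real) \<Rightarrow> 'a set \<Rightarrow> 'a set \<Rightarrow> 'a \<Rightarrow> 'a \<Rightarrow> real" where
  "Rmat P K A x y =
     (if x \<in> Sprime P K A then
        (if y \<in> K then P x y / uhit P K A x
         else if y \<in> Sprime P K A then P x y * uhit P K A y / uhit P K A x
         else 0)
      else 0)"

definition closed_comm_class :: "'a set \<Rightarrow> ('a \<Rightarrow> 'a \<Rightarrow> real) \<Rightarrow> 'a set \<Rightarrow> bool" where
  "closed_comm_class S M C \<longleftrightarrow> C \<noteq> {} \<and> C \<subseteq> S \<and>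
     (\<forall>x\<in>C. \<forall>y\<in>C. (x, y) \<in> {(a, b). a \<in> S \<and> b \<in> S \<and> M a b > 0}\<^sup>*) \<and>
     (\<forall>x\<in>C. \<forall>y\<in>S. (x, y) \<in> {(a, b). a \<in> S \<and> b \<in> S \<and> M a b > 0}\<^sup>* \<longrightarrow> y \<in> C)"

definition stationary_on :: "'a set \<Rightarrow> ('a \<Rightarrow> 'a \<Rightarrow> real) \<Rightarrow> ('a \<Rightarrow> real) \<Rightarrow> bool" where
  "stationary_on C M q \<longleftrightarrow> (\<forall>x. q x \<ge> 0) \<and> (\<forall>x. x \<notin> C \<longrightarrow> q x = 0) \<and>
     (\<Sum>x\<in>C. q x) = 1 \<and> (\<forall>y\<in>C. (\<Sum>x\<in>C. q x * M x y) = q y)"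

end

theory Submission
  imports Defs
begin

text \<open>
  Write \<open>u\<^sub>n(x) = P\<^sub>x(T\<^sub>K < T\<^sub>n)\<close> and \<open>w\<^sub>n = \<pi>\<^sup>*\<^sub>3\<^sub>n / u\<^sub>n\<close>. Stationarity of \<open>R\<^sub>n\<close> on its closed class
  says that \<open>w\<^sub>n\<close> solves the excursion equation of the chain killed on leaving \<open>A\<^sub>n\<close>, whose unique
  solution is the occupation measure of excursions from \<open>K\<close>:
  \<open>\<pi>\<^sup>*\<^sub>3\<^sub>n(y) = h\<^sub>n(y) \<Sum>\<^sub>k\<^sub>\<in>\<^sub>K w\<^sub>n(k) N\<^sub>n(k,y)\<close>, with \<open>h\<^sub>n = 1\<close> on \<open>K\<close> and \<open>h\<^sub>n = u\<^sub>n\<close> off \<open>K\<close>, where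
  \<open>N\<^sub>n(k,y)\<close> is the expected number of visits to \<open>y\<close> in an excursion from \<open>k\<close> that stops on
  returning to \<open>K\<close> or on leaving \<open>A\<^sub>n\<close>. As \<open>n \<rightarrow> \<infinity>\<close>, \<open>N\<^sub>n \<rightarrow> N\<close> (the unrestricted excursion kernel)
  and \<open>u\<^sub>n \<rightarrow> 1\<close> by recurrence. On \<open>K\<close>, the normalised \<open>w\<^sub>n\<close> is invariant for \<open>G\<^sub>n\<close>, so by compactness
  all its limit points are invariant for the irreducible matrix \<open>G = N|\<^sub>K\<close>, which has the unique
  invariant distribution \<open>\<pi>|\<^sub>K / \<pi>(K)\<close> by the cycle formula \<open>\<pi>(y) = \<Sum>\<^sub>k\<^sub>\<in>\<^sub>K \<pi>(k) N(k,y)\<close>.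
  Hence \<open>\<pi>\<^sup>*\<^sub>3\<^sub>n\<close> divided by the total weight \<open>\<Sum>\<^sub>K w\<^sub>n\<close> converges pointwise to \<open>\<pi> / \<pi>(K)\<close>, dominated by
  \<open>\<pi> / min\<^sub>K \<pi>\<close>; summing identifies the limit of the total weight as \<open>\<pi>(K)\<close>.
\<close>

section \<open>Infinite sums\<close>

lemma summable_on_sum:
  fixes f :: "'i \<Rightarrow> 'b \<Rightarrow> 'c::topological_comm_monoid_add"
  assumes "finite I" "\<And>i. i \<in> I \<Longrightarrow> f i summable_on S"
  shows "(\<lambda>x. \<Sum>i\<in>I. f i x) summable_on S"
  using assms by (induction I rule: finite_induct) (auto intro: summable_on_add)

lemma infsum_sum:
  fixes f :: "'i \<Rightarrow> 'b \<Rightarrow> 'c::{topological_comm_monoid_add, t2_space}"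
  assumes "finite I" "\<And>i. i \<in> I \<Longrightarrow> f i summable_on S"
  shows "infsum (\<lambda>x. \<Sum>i\<in>I. f i x) S = (\<Sum>i\<in>I. infsum (f i) S)"
  using assms
proof (induction I rule: finite_induct)
  case (insert a I)
  then show ?case
    by (simp add: infsum_add summable_on_sum)
qed simp

lemma infsum_diff:
  fixes f g :: "'b \<Rightarrow> 'c::{topological_ab_group_add, t2_space}"
  assumes "f summable_on S" "g summable_on S"
  shows "infsum (\<lambda>x. f x - g x) S = infsum f S - infsum g S"
  using infsum_add[OF assms(1), of "\<lambda>x. - g x"] assms(2)
  by (simp add: summable_on_uminus infsum_uminus)

lemma summable_on_abs_le:
  fixes f g :: "'b \<Rightarrow> real"
  assumes "g summable_on S" "\<And>x. x \<in> S \<Longrightarrow> \<bar>f x\<bar> \<le> g x"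
  shows "f summable_on S"
  using Infinite_Sum.abs_summable_on_comparison_test'[OF assms(1), of f] assms(2)
    summable_on_iff_abs_summable_on_real[of f] by simp

lemma infsum_abs_le:
  fixes f g :: "'b \<Rightarrow> real"
  assumes "g summable_on S" "\<And>x. x \<in> S \<Longrightarrow> \<bar>f x\<bar> \<le> g x"
  shows "\<bar>infsum f S\<bar> \<le> infsum g S"
  using norm_infsum_le[OF has_sum_infsum[OF summable_on_abs_le[OF assms]] has_sum_infsum[OF assms(1)]]
    assms(2) by simp

lemma infsum_tendsto_dominated:
  fixes f :: "nat \<Rightarrow> 'b \<Rightarrow> real"
  assumes g: "g summable_on S"
    and bound: "\<And>n x. x \<in> S \<Longrightarrow> \<bar>f n x\<bar> \<le> g x"
    and lim: "\<And>x. x \<in> S \<Longrightarrow> (\<lambda>n. f n x) \<longlonglongrightarrow> h x"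
  shows "(\<lambda>n. infsum (f n) S) \<longlonglongrightarrow> infsum h S"
proof (rule LIMSEQ_I)
  fix r :: real assume "r > 0"
  define e where "e = r / 4"
  have e: "e > 0" using \<open>r > 0\<close> by (simp add: e_def)
  have h_bound: "\<bar>h x\<bar> \<le> g x" if "x \<in> S" for x
    using tendsto_rabs[OF lim[OF that]] by (rule LIMSEQ_le_const2) (use bound that in auto)
  obtain F where F: "finite F" "F \<subseteq> S" "dist (sum g F) (infsum g S) \<le> e"
    using infsum_finite_approximation[OF g e] by blast
  have tail: "infsum g (S - F) \<le> e"
    using infsum_Diff[OF g _ F(2)] summable_on_subset_banach[OF g F(2)] F
    by (auto simp: dist_real_def)
  have approx: "\<bar>infsum \<phi> S - sum \<phi> F\<bar> \<le> e" if "\<And>x. x \<in> S \<Longrightarrow> \<bar>\<phi> x\<bar> \<le> g x" for \<phi>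
  proof -
    have "infsum \<phi> S - sum \<phi> F = infsum \<phi> (S - F)"
      using infsum_Diff[OF summable_on_abs_le[OF g that] _ F(2)] F(1) by simp
    moreover have "\<bar>infsum \<phi> (S - F)\<bar> \<le> infsum g (S - F)"
      by (rule infsum_abs_le) (use summable_on_subset_banach[OF g] that in auto)
    ultimately show ?thesis using tail by simp
  qed
  have "(\<lambda>n. sum (f n) F) \<longlonglongrightarrow> sum h F"
    by (rule tendsto_sum) (use lim F in auto)
  then obtain N where N: "\<And>n. n \<ge> N \<Longrightarrow> \<bar>sum (f n) F - sum h F\<bar> < e"
    using LIMSEQ_D[OF _ e] by (metis real_norm_def)
  have "\<bar>infsum (f n) S - infsum h S\<bar> < 3 * e" if "n \<ge> N" for n
    using approx[of "f n"] approx[of h] bound h_bound N[OF that] by fastforce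
  then show "\<exists>N. \<forall>n\<ge>N. norm (infsum (f n) S - infsum h S) < r"
    using e by (force simp: e_def)
qed

section \<open>Nonnegative matrices on finite sets\<close>

lemma sum_pos_imp_ex_pos:
  fixes f :: "'a \<Rightarrow> 'b::{ordered_comm_monoid_add, linorder}"
  assumes "0 < sum f A"
  shows "\<exists>a\<in>A. 0 < f a"
  using sum_nonpos[of A f] assms by (meson not_le)

lemma convergent_subseq_finite:
  fixes a :: "nat \<Rightarrow> 'a \<Rightarrow> real"
  assumes "finite K" and "\<And>n k. k \<in> K \<Longrightarrow> \<bar>a n k\<bar> \<le> M"
  shows "\<exists>r. strict_mono r \<and> (\<forall>k\<in>K. convergent (\<lambda>n. a (r n) k))"
  using assms
proof (induction K rule: finite_induct)
  case empty
  show ?case using strict_mono_id by blast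
next
  case (insert x F)
  obtain r where r: "strict_mono r" "\<forall>k\<in>F. convergent (\<lambda>n. a (r n) k)"
    using insert by blast
  have "bounded (range (\<lambda>n. a (r n) x))"
    using insert.prems by (intro boundedI[of _ M]) auto
  then obtain l s where s: "strict_mono s" "((\<lambda>n. a (r n) x) \<circ> s) \<longlonglongrightarrow> l"
    using bounded_imp_convergent_subsequence by blast
  have "convergent (\<lambda>n. a (r (s n)) k)" if "k \<in> insert x F" for k
    using that s convergent_subseq_convergent[OF bspec[OF r(2)] s(1)]
    by (auto simp: convergent_def o_def)
  moreover have "strict_mono (\<lambda>n. r (s n))"
    using strict_mono_o[OF r(1) s(1)] by (simp add: o_def)
  ultimately show ?case by blast
qed

lemma LIMSEQ_if_subseqs_LIMSEQ:
  fixes X :: "nat \<Rightarrow> 'a::metric_space"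
  assumes "\<And>r :: nat \<Rightarrow> nat. strict_mono r \<Longrightarrow> \<exists>s :: nat \<Rightarrow> nat. strict_mono s \<and> (\<lambda>n. X (r (s n))) \<longlonglongrightarrow> L"
  shows "X \<longlonglongrightarrow> L"
proof (rule ccontr)
  assume "\<not> X \<longlonglongrightarrow> L"
  then obtain e where e: "e > 0" "\<forall>N. \<exists>n\<ge>N. e \<le> dist (X n) L"
    unfolding lim_sequentially by (auto simp: not_less)
  then have "infinite {n. e \<le> dist (X n) L}"
    by (simp add: infinite_nat_iff_unbounded_le)
  then obtain r :: "nat \<Rightarrow> nat" where r: "strict_mono r" "\<And>n. e \<le> dist (X (r n)) L"
    using infinite_enumerate by blast
  obtain s where s: "strict_mono s" "(\<lambda>n. X (r (s n))) \<longlonglongrightarrow> L"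
    using assms r(1) by blast
  have "(\<lambda>n. dist (X (r (s n))) L) \<longlonglongrightarrow> dist L L"
    by (intro tendsto_dist s(2) tendsto_const)
  then have "e \<le> dist L L"
    by (rule LIMSEQ_le_const) (use r(2) in blast)
  then show False using e by simp
qed

lemma irreducible_invariant_zero:
  fixes G :: "'a \<Rightarrow> 'a \<Rightarrow> real"
  assumes finK: "finite K"
    and G_nonneg: "\<And>k y. k \<in> K \<Longrightarrow> y \<in> K \<Longrightarrow> 0 \<le> G k y"
    and irr: "irreducible_on K G"
    and e_nonneg: "\<And>k. k \<in> K \<Longrightarrow> 0 \<le> e k"
    and e_inv: "\<And>y. y \<in> K \<Longrightarrow> e y = (\<Sum>k\<in>K. e k * G k y)"
    and k0: "k0 \<in> K" "e k0 = 0"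
    and a: "a \<in> K"
  shows "e a = 0"
proof -
  have e_pred: "e a = 0" if "a \<in> K" "y \<in> K" "G a y > 0" "e y = 0" for a y
  proof -
    have "(\<Sum>k\<in>K. e k * G k y) = 0"
      using e_inv[OF that(2)] that(4) by simp
    moreover have "\<forall>k\<in>K. 0 \<le> e k * G k y"
      using e_nonneg G_nonneg[OF _ that(2)] by simp
    ultimately have "\<forall>k\<in>K. e k * G k y = 0"
      using sum_nonneg_eq_0_iff[OF finK, of "\<lambda>k. e k * G k y"] by blast
    then have "e a * G a y = 0"
      using that(1) by blast
    then show ?thesis
      using that(3) by simp
  qed
  have "(a, k0) \<in> {(a, b). a \<in> K \<and> b \<in> K \<and> G a b > 0}\<^sup>+"
    using irr a k0(1) unfolding irreducible_on_def by blast
  then show ?thesis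
  proof (induction rule: converse_trancl_induct)
    case (base y)
    then show ?case using e_pred k0 by blast
  next
    case (step y z)
    then show ?case using e_pred by blast
  qed
qed

lemma irreducible_invariant_unique:
  fixes G :: "'a \<Rightarrow> 'a \<Rightarrow> real"
  assumes finK: "finite K" and Kne: "K \<noteq> {}"
    and G_nonneg: "\<And>k y. k \<in> K \<Longrightarrow> y \<in> K \<Longrightarrow> 0 \<le> G k y"
    and irr: "irreducible_on K G"
    and \<pi>_pos: "\<And>k. k \<in> K \<Longrightarrow> 0 < \<pi> k"
    and \<pi>_inv: "\<And>y. y \<in> K \<Longrightarrow> \<pi> y = (\<Sum>k\<in>K. \<pi> k * G k y)"
    and b_sum: "(\<Sum>k\<in>K. b k) = 1"
    and b_inv: "\<And>y. y \<in> K \<Longrightarrow> b y = (\<Sum>k\<in>K. b k * G k y)"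
    and k: "k \<in> K"
  shows "b k = \<pi> k / (\<Sum>k\<in>K. \<pi> k)"
proof -
  define c where "c = Min ((\<lambda>k. b k / \<pi> k) ` K)"
  have "c \<in> (\<lambda>k. b k / \<pi> k) ` K"
    unfolding c_def using finK Kne by (intro Min_in) auto
  then obtain k0 where k0: "k0 \<in> K" "c = b k0 / \<pi> k0" by blast
  have c_le: "c \<le> b k / \<pi> k" if "k \<in> K" for k
    unfolding c_def using finK that by auto
  have b_eq: "b a = c * \<pi> a" if a: "a \<in> K" for a
  proof -
    have "b a - c * \<pi> a = 0"
    proof (rule irreducible_invariant_zero[OF finK G_nonneg irr _ _ k0(1) _ a])
      show "0 \<le> b k - c * \<pi> k" if "k \<in> K" for k
        using c_le[OF that] \<pi>_pos[OF that] by (simp add: field_simps)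
      show "b y - c * \<pi> y = (\<Sum>k\<in>K. (b k - c * \<pi> k) * G k y)" if "y \<in> K" for y
        using b_inv[OF that] \<pi>_inv[OF that]
        by (simp add: left_diff_distrib sum_subtractf sum_distrib_left mult.assoc)
      show "b k0 - c * \<pi> k0 = 0"
        using k0 \<pi>_pos[OF k0(1)] by simp
    qed
    then show ?thesis by simp
  qed
  have "1 = c * (\<Sum>k\<in>K. \<pi> k)"
    using b_sum by (simp add: b_eq sum_distrib_left)
  moreover have "0 < (\<Sum>k\<in>K. \<pi> k)"
    using finK Kne \<pi>_pos by (simp add: sum_pos)
  ultimately show ?thesis
    using b_eq[OF k] by (simp add: field_simps)
qed

lemma invariant_tendsto:
  fixes a :: "nat \<Rightarrow> 'a \<Rightarrow> real" and G :: "'a \<Rightarrow> 'a \<Rightarrow> real"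
  assumes finK: "finite K" and Kne: "K \<noteq> {}"
    and a_nonneg: "\<And>n k. k \<in> K \<Longrightarrow> 0 \<le> a n k"
    and a_sum: "\<And>n. (\<Sum>k\<in>K. a n k) = 1"
    and a_inv: "\<And>n y. y \<in> K \<Longrightarrow> a n y * U n y = (\<Sum>k\<in>K. a n k * Gn n k y)"
    and Gn_lim: "\<And>k y. k \<in> K \<Longrightarrow> y \<in> K \<Longrightarrow> (\<lambda>n. Gn n k y) \<longlonglongrightarrow> G k y"
    and U_lim: "\<And>y. y \<in> K \<Longrightarrow> (\<lambda>n. U n y) \<longlonglongrightarrow> 1"
    and G_nonneg: "\<And>k y. k \<in> K \<Longrightarrow> y \<in> K \<Longrightarrow> 0 \<le> G k y"
    and irr: "irreducible_on K G"
    and \<pi>_pos: "\<And>k. k \<in> K \<Longrightarrow> 0 < \<pi> k"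
    and \<pi>_inv: "\<And>y. y \<in> K \<Longrightarrow> \<pi> y = (\<Sum>k\<in>K. \<pi> k * G k y)"
    and k0: "k0 \<in> K"
  shows "(\<lambda>n. a n k0) \<longlonglongrightarrow> \<pi> k0 / (\<Sum>k\<in>K. \<pi> k)"
proof (rule LIMSEQ_if_subseqs_LIMSEQ)
  fix r :: "nat \<Rightarrow> nat" assume r: "strict_mono r"
  have a_le_1: "a n k \<le> 1" if "k \<in> K" for n k
    using member_le_sum[OF that, of "a n"] a_nonneg finK a_sum[of n] by simp
  obtain s where s: "strict_mono s" "\<forall>k\<in>K. convergent (\<lambda>n. a (r (s n)) k)"
    using convergent_subseq_finite[OF finK, of "\<lambda>n. a (r n)" 1] a_nonneg a_le_1 by force
  define t where "t = r \<circ> s"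
  have t: "strict_mono t"
    unfolding t_def by (rule strict_mono_o[OF r s(1)])
  have along_t: "(\<lambda>n. f (t n)) \<longlonglongrightarrow> l" if "f \<longlonglongrightarrow> l" for f :: "nat \<Rightarrow> real" and l
    using LIMSEQ_subseq_LIMSEQ[OF that t] by (simp add: o_def)
  define b where "b k = lim (\<lambda>n. a (t n) k)" for k
  have b_lim: "(\<lambda>n. a (t n) k) \<longlonglongrightarrow> b k" if "k \<in> K" for k
    using s(2) that unfolding b_def t_def by (simp add: convergent_LIMSEQ_iff)
  have "(\<lambda>n. \<Sum>k\<in>K. a (t n) k) \<longlonglongrightarrow> (\<Sum>k\<in>K. b k)"
    by (intro tendsto_sum b_lim)
  then have b_sum: "(\<Sum>k\<in>K. b k) = 1"
    using a_sum by (simp add: LIMSEQ_const_iff)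
  have b_inv: "b y = (\<Sum>k\<in>K. b k * G k y)" if y: "y \<in> K" for y
  proof -
    have "(\<lambda>n. a (t n) y * U (t n) y) \<longlonglongrightarrow> b y * 1"
      by (intro tendsto_mult b_lim y along_t U_lim)
    moreover have "(\<lambda>n. \<Sum>k\<in>K. a (t n) k * Gn (t n) k y) \<longlonglongrightarrow> (\<Sum>k\<in>K. b k * G k y)"
      by (intro tendsto_sum tendsto_mult b_lim along_t Gn_lim y)
    ultimately show ?thesis
      using LIMSEQ_unique a_inv[OF y] by auto
  qed
  have "b k0 = \<pi> k0 / (\<Sum>k\<in>K. \<pi> k)"
    by (rule irreducible_invariant_unique[OF finK Kne G_nonneg irr \<pi>_pos \<pi>_inv b_sum b_inv k0])
  then show "\<exists>s. strict_mono s \<and> (\<lambda>n. a (r (s n)) k0) \<longlonglongrightarrow> \<pi> k0 / (\<Sum>k\<in>K. \<pi> k)"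
    using s(1) b_lim[OF k0] by (auto simp: t_def)
qed

lemma subinvariant_balance:
  fixes Q :: "'a \<Rightarrow> 'a \<Rightarrow> real"
  assumes finB: "finite B"
    and e_nonneg: "\<And>x. x \<in> B \<Longrightarrow> 0 \<le> e x"
    and h_pos: "\<And>x. x \<in> B \<Longrightarrow> 0 < h x"
    and h_eq: "\<And>x. x \<in> B \<Longrightarrow> h x = e x + (\<Sum>y\<in>B. Q x y * h y)"
    and d_nonneg: "\<And>x. x \<in> B \<Longrightarrow> 0 \<le> d x"
    and d_sub: "\<And>y. y \<in> B \<Longrightarrow> d y \<le> (\<Sum>x\<in>B. d x * Q x y)"
  shows "(\<forall>x\<in>B. d x * e x = 0) \<and> (\<forall>y\<in>B. d y = (\<Sum>x\<in>B. d x * Q x y))"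
proof -
  text \<open>Pairing the defect of subinvariance with \<open>h\<close> gives, by \<open>h_eq\<close>, minus the pairing of \<open>d\<close>
    with \<open>e\<close>; both pairings have nonnegative terms.\<close>
  define slack where "slack y = (\<Sum>x\<in>B. d x * Q x y) - d y" for y
  have "(\<Sum>y\<in>B. (\<Sum>x\<in>B. d x * Q x y) * h y) = (\<Sum>y\<in>B. \<Sum>x\<in>B. d x * Q x y * h y)"
    by (simp add: sum_distrib_right)
  also have "\<dots> = (\<Sum>x\<in>B. \<Sum>y\<in>B. d x * Q x y * h y)"
    by (rule sum.swap)
  also have "\<dots> = (\<Sum>x\<in>B. d x * h x - d x * e x)"
    by (intro sum.cong refl) (simp add: h_eq sum_distrib_left mult.assoc algebra_simps)
  finally have "(\<Sum>y\<in>B. slack y * h y) = - (\<Sum>x\<in>B. d x * e x)"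
    by (simp add: slack_def left_diff_distrib sum_subtractf)
  moreover have nonneg_exit: "0 \<le> d x * e x" if "x \<in> B" for x
    using d_nonneg e_nonneg that by simp
  moreover have nonneg_slack: "0 \<le> slack y * h y" if "y \<in> B" for y
    using d_sub h_pos that by (simp add: slack_def less_imp_le)
  ultimately have "(\<Sum>x\<in>B. d x * e x) = 0" "(\<Sum>y\<in>B. slack y * h y) = 0"
    using sum_nonneg[of B "\<lambda>x. d x * e x"] sum_nonneg[of B "\<lambda>y. slack y * h y"] by auto
  then have "\<forall>x\<in>B. d x * e x = 0" and no_slack: "\<forall>y\<in>B. slack y * h y = 0"
    using sum_nonneg_eq_0_iff[OF finB nonneg_exit] sum_nonneg_eq_0_iff[OF finB nonneg_slack]
    by simp_all
  moreover have "d y = (\<Sum>x\<in>B. d x * Q x y)" if "y \<in> B" for y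
    using bspec[OF no_slack that] h_pos[OF that] by (simp add: slack_def)
  ultimately show ?thesis
    by blast
qed

lemma subinvariant_vanishes:
  fixes Q :: "'a \<Rightarrow> 'a \<Rightarrow> real"
  assumes finB: "finite B"
    and Q_nonneg: "\<And>x y. x \<in> B \<Longrightarrow> y \<in> B \<Longrightarrow> 0 \<le> Q x y"
    and e_nonneg: "\<And>x. x \<in> B \<Longrightarrow> 0 \<le> e x"
    and h_pos: "\<And>x. x \<in> B \<Longrightarrow> 0 < h x"
    and h_eq: "\<And>x. x \<in> B \<Longrightarrow> h x = e x + (\<Sum>y\<in>B. Q x y * h y)"
    and exit: "\<And>x. x \<in> B \<Longrightarrow> \<exists>x'. (x, x') \<in> {(a, b). a \<in> B \<and> b \<in> B \<and> 0 < Q a b}\<^sup>* \<and> 0 < e x'"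
    and d_nonneg: "\<And>x. x \<in> B \<Longrightarrow> 0 \<le> d x"
    and d_sub: "\<And>y. y \<in> B \<Longrightarrow> d y \<le> (\<Sum>x\<in>B. d x * Q x y)"
    and y: "y \<in> B"
  shows "d y = 0"
proof (rule ccontr)
  have no_exit: "\<forall>x\<in>B. d x * e x = 0" and d_inv: "\<forall>y\<in>B. d y = (\<Sum>x\<in>B. d x * Q x y)"
    using subinvariant_balance[OF finB e_nonneg h_pos h_eq d_nonneg d_sub] by blast+
  have d_forward: "0 < d b" if "a \<in> B" "b \<in> B" "0 < Q a b" "0 < d a" for a b
  proof -
    have "d a * Q a b \<le> (\<Sum>x\<in>B. d x * Q x b)"
      by (rule member_le_sum[OF that(1) _ finB]) (simp add: d_nonneg Q_nonneg that(2))
    moreover have "0 < d a * Q a b"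
      using that(3,4) by simp
    ultimately show ?thesis
      using d_inv that(2) by auto
  qed
  assume "d y \<noteq> 0"
  then have "0 < d y"
    using d_nonneg[OF y] by simp
  obtain x' where path: "(y, x') \<in> {(a, b). a \<in> B \<and> b \<in> B \<and> 0 < Q a b}\<^sup>*" and "0 < e x'"
    using exit[OF y] by blast
  from path have "x' \<in> B \<and> 0 < d x'"
    by (induction rule: rtrancl_induct) (use y \<open>0 < d y\<close> d_forward in auto)
  then show False
    using no_exit \<open>0 < e x'\<close> by auto
qed

lemma invariant_vanishes:
  fixes Q :: "'a \<Rightarrow> 'a \<Rightarrow> real"
  assumes finB: "finite B"
    and Q_nonneg: "\<And>x y. x \<in> B \<Longrightarrow> y \<in> B \<Longrightarrow> 0 \<le> Q x y"
    and e_nonneg: "\<And>x. x \<in> B \<Longrightarrow> 0 \<le> e x"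
    and h_pos: "\<And>x. x \<in> B \<Longrightarrow> 0 < h x"
    and h_eq: "\<And>x. x \<in> B \<Longrightarrow> h x = e x + (\<Sum>y\<in>B. Q x y * h y)"
    and exit: "\<And>x. x \<in> B \<Longrightarrow> \<exists>x'. (x, x') \<in> {(a, b). a \<in> B \<and> b \<in> B \<and> 0 < Q a b}\<^sup>* \<and> 0 < e x'"
    and d_inv: "\<And>y. y \<in> B \<Longrightarrow> d y = (\<Sum>x\<in>B. d x * Q x y)"
    and y: "y \<in> B"
  shows "d y = 0"
proof -
  have "\<bar>d y\<bar> \<le> (\<Sum>x\<in>B. \<bar>d x\<bar> * Q x y)" if "y \<in> B" for y
    using sum_abs[of "\<lambda>x. d x * Q x y" B] d_inv[OF that] Q_nonneg[OF _ that]
    by (simp add: abs_mult)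
  then have "\<bar>d y\<bar> = 0"
    by (intro subinvariant_vanishes[OF finB Q_nonneg e_nonneg h_pos h_eq exit _ _ y]) auto
  then show ?thesis by simp
qed

lemma stationary_on_closed_class_sum:
  assumes cc: "closed_comm_class S M C" and st: "stationary_on C M q"
    and M_nonneg: "\<And>x y. 0 \<le> M x y"
    and M_out: "\<And>x y. x \<in> S \<Longrightarrow> y \<notin> S \<Longrightarrow> M x y = 0"
    and T: "finite T" "C \<subseteq> T"
  shows "q y = (\<Sum>x\<in>T. q x * M x y)"
proof -
  have q_out: "q x = 0" if "x \<notin> C" for x
    using st that unfolding stationary_on_def by auto
  have "(\<Sum>x\<in>T. q x * M x y) = (\<Sum>x\<in>C. q x * M x y)"
    by (rule sum.mono_neutral_right[OF T]) (auto simp: q_out)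
  also have "\<dots> = q y"
  proof (cases "y \<in> C")
    case True
    then show ?thesis using st unfolding stationary_on_def by auto
  next
    case False
    have "M x y = 0" if "x \<in> C" for x
    proof (cases "y \<in> S")
      case True
      have "x \<in> S" using cc that unfolding closed_comm_class_def by auto
      with True that False cc have "\<not> 0 < M x y"
        unfolding closed_comm_class_def by blast
      then show ?thesis using M_nonneg[of x y] by simp
    next
      case False
      then show ?thesis using M_out cc that unfolding closed_comm_class_def by auto
    qed
    then show ?thesis using q_out[OF False] by simp
  qed
  finally show ?thesis by simp
qed

section \<open>Taboo and survival probabilities\<close>

locale markov_chain =
  fixes P :: "'a \<Rightarrow> 'a \<Rightarrow> real"
  assumes stochastic: "stochastic P"
begin

lemma P_nonneg: "0 \<le> P x y"
  using stochastic unfolding stochastic_def by auto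

lemma P_has_sum: "(P x has_sum 1) UNIV"
  using stochastic unfolding stochastic_def by auto

lemma P_summable_on: "P x summable_on C"
  using summable_on_subset_banach[OF has_sum_imp_summable[OF P_has_sum]] by blast

lemma P_le_1: "P x y \<le> 1"
  using finite_sum_le_has_sum[OF P_has_sum, of "{y}"] P_nonneg by auto

lemma summable_on_P_mult:
  assumes "\<And>z. z \<in> C \<Longrightarrow> \<bar>f z\<bar> \<le> c"
  shows "(\<lambda>z. P x z * f z) summable_on C"
proof (rule summable_on_abs_le)
  show "(\<lambda>z. c * P x z) summable_on C"
    by (rule summable_on_cmult_right[OF P_summable_on])
  show "\<bar>P x z * f z\<bar> \<le> c * P x z" if "z \<in> C" for z
    using assms[OF that] P_nonneg by (simp add: abs_mult mult_right_mono mult.commute)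
qed

lemma infsum_P_mult_bounds:
  assumes "\<And>z. z \<in> C \<Longrightarrow> 0 \<le> f z" "\<And>z. z \<in> C \<Longrightarrow> f z \<le> 1"
  shows "0 \<le> infsum (\<lambda>z. P x z * f z) C \<and> infsum (\<lambda>z. P x z * f z) C \<le> 1"
proof
  show "0 \<le> infsum (\<lambda>z. P x z * f z) C"
    by (rule infsum_nonneg) (use assms P_nonneg in auto)
  have "infsum (\<lambda>z. P x z * f z) C \<le> infsum (P x) C"
    by (rule infsum_mono[OF summable_on_P_mult P_summable_on])
      (use assms P_nonneg in \<open>auto intro: mult_left_le\<close>)
  also have "\<dots> \<le> infsum (P x) UNIV"
    by (rule infsum_mono2[OF P_summable_on P_summable_on]) (auto simp: P_nonneg)
  finally show "infsum (\<lambda>z. P x z * f z) C \<le> 1"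
    using infsumI[OF P_has_sum] by simp
qed

lemma taboo_bounds: "0 \<le> taboo P C j x y \<and> taboo P C j x y \<le> 1"
proof (induction j arbitrary: x rule: less_induct)
  case (less j)
  consider "j = 0" | "j = 1" | i where "j = Suc (Suc i)"
    by (metis One_nat_def not0_implies_Suc)
  then show ?case
  proof cases
    case 3
    then show ?thesis
      using infsum_P_mult_bounds[of C "\<lambda>z. taboo P C (Suc i) z y" x] less by simp
  qed (use P_nonneg P_le_1 in auto)
qed

lemma taboo_nonneg: "0 \<le> taboo P C j x y"
  using taboo_bounds by blast

lemma summable_on_P_taboo: "(\<lambda>z. P x z * taboo P C j z y) summable_on D"
  by (rule summable_on_P_mult[of D _ 1]) (use taboo_bounds in auto)

lemma P_taboo_le_taboo:
  assumes "z \<in> C"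
  shows "P x z * taboo P C (Suc j) z y \<le> taboo P C (Suc (Suc j)) x y"
  using finite_sum_le_infsum[OF summable_on_P_taboo, where B="{z}" and A=C] assms P_nonneg taboo_nonneg
  by simp

lemma taboo_mono:
  assumes "C \<subseteq> D"
  shows "taboo P C j x y \<le> taboo P D j x y"
proof (induction j arbitrary: x rule: less_induct)
  case (less j)
  show ?case
  proof (cases "j < 2")
    case True
    then show ?thesis by (cases j) (auto simp: numeral_2_eq_2 less_Suc_eq)
  next
    case False
    then obtain i where j: "j = Suc (Suc i)" by (metis add_2_eq_Suc le_Suc_ex not_less)
    have "infsum (\<lambda>z. P x z * taboo P C (Suc i) z y) C \<le> infsum (\<lambda>z. P x z * taboo P D (Suc i) z y) D"
      by (rule infsum_mono_neutral[OF summable_on_P_taboo summable_on_P_taboo])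
        (use assms less j P_nonneg taboo_nonneg in \<open>auto intro: mult_left_mono\<close>)
    then show ?thesis using j by simp
  qed
qed

lemma taboo_last_step:
  assumes "finite C"
  shows "taboo P C (Suc (Suc j)) x y = (\<Sum>z\<in>C. taboo P C (Suc j) x z * P z y)"
proof (induction j arbitrary: x)
  case 0
  then show ?case using assms by simp
next
  case (Suc j)
  have "taboo P C (Suc (Suc (Suc j))) x y = (\<Sum>z\<in>C. P x z * (\<Sum>w\<in>C. taboo P C (Suc j) z w * P w y))"
    using assms Suc by simp
  also have "\<dots> = (\<Sum>z\<in>C. \<Sum>w\<in>C. P x z * taboo P C (Suc j) z w * P w y)"
    by (simp add: sum_distrib_left mult.assoc)
  also have "\<dots> = (\<Sum>w\<in>C. \<Sum>z\<in>C. P x z * taboo P C (Suc j) z w * P w y)"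
    by (rule sum.swap)
  also have "\<dots> = (\<Sum>w\<in>C. (\<Sum>z\<in>C. P x z * taboo P C (Suc j) z w) * P w y)"
    by (simp add: sum_distrib_right)
  also have "\<dots> = (\<Sum>w\<in>C. taboo P C (Suc (Suc j)) x w * P w y)"
    using assms by simp
  finally show ?case .
qed

text \<open>\<open>survival C m x = P\<^sub>x(X\<^sub>1, ..., X\<^sub>m \<in> C)\<close>.\<close>
fun survival :: "'a set \<Rightarrow> nat \<Rightarrow> 'a \<Rightarrow> real" where
  "survival C 0 x = 1"
| "survival C (Suc m) x = infsum (\<lambda>z. P x z * survival C m z) C"

lemma survival_bounds: "0 \<le> survival C m x \<and> survival C m x \<le> 1"
  by (induction m arbitrary: x) (simp_all add: infsum_P_mult_bounds)

lemma survival_nonneg: "0 \<le> survival C m x"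
  using survival_bounds by blast

lemma summable_on_P_survival: "(\<lambda>z. P x z * survival C m z) summable_on D"
  by (rule summable_on_P_mult[of D _ 1]) (use survival_bounds in auto)

lemma survival_mono:
  assumes "C \<subseteq> D"
  shows "survival C m x \<le> survival D m x"
proof (induction m arbitrary: x)
  case (Suc m)
  have "infsum (\<lambda>z. P x z * survival C m z) C \<le> infsum (\<lambda>z. P x z * survival D m z) D"
    by (rule infsum_mono_neutral[OF summable_on_P_survival summable_on_P_survival])
      (use assms Suc.IH P_nonneg survival_nonneg in \<open>auto intro: mult_left_mono\<close>)
  then show ?case by simp
qed simp

lemma taboo_le_survival: "taboo P C (Suc m) x y \<le> survival C m x"
proof (induction m arbitrary: x)
  case 0
  then show ?case using P_le_1 by simp
next
  case (Suc m)
  have "infsum (\<lambda>z. P x z * taboo P C (Suc m) z y) C \<le> infsum (\<lambda>z. P x z * survival C m z) C"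
    by (rule infsum_mono[OF summable_on_P_taboo summable_on_P_survival])
      (use Suc.IH P_nonneg in \<open>auto intro: mult_left_mono\<close>)
  then show ?case by simp
qed

lemma taboo_mult_survival_le:
  assumes "x \<in> C"
  shows "taboo P C (Suc j) k x * survival C m x \<le> survival C (Suc j + m) k"
proof (induction j arbitrary: k)
  case 0
  show ?case
    using finite_sum_le_infsum[OF summable_on_P_survival, where B="{x}" and A=C] assms P_nonneg
      survival_nonneg
    by simp
next
  case (Suc j)
  have "taboo P C (Suc (Suc j)) k x * survival C m x
        = infsum (\<lambda>z. P k z * taboo P C (Suc j) z x * survival C m x) C"
    using infsum_cmult_left'[where f="\<lambda>z. P k z * taboo P C (Suc j) z x" and A=C] by simp
  also have "\<dots> \<le> infsum (\<lambda>z. P k z * survival C (Suc j + m) z) C"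
  proof (rule infsum_mono[OF summable_on_cmult_left[OF summable_on_P_taboo] summable_on_P_survival])
    show "P k z * taboo P C (Suc j) z x * survival C m x \<le> P k z * survival C (Suc j + m) z" for z
      using Suc.IH[of z] P_nonneg by (simp add: mult.assoc mult_left_mono)
  qed
  finally show ?case by simp
qed

lemma survival_diff:
  assumes "finite (- C)"
  shows "survival C m x - survival C (Suc m) x = (\<Sum>y\<in>-C. taboo P C (Suc m) x y)"
proof (induction m arbitrary: x)
  case 0
  have "infsum (P x) UNIV = infsum (P x) C + sum (P x) (- C)"
    using infsum_Un_disjoint[of "P x" C "- C"] P_summable_on assms by simp
  then show ?case using infsumI[OF P_has_sum] by simp
next
  case (Suc m)
  have "survival C (Suc m) x - survival C (Suc (Suc m)) x
      = infsum (\<lambda>z. P x z * survival C m z - P x z * survival C (Suc m) z) C"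
    unfolding survival.simps(2)[of C m x] survival.simps(2)[of C "Suc m" x]
    by (rule infsum_diff[symmetric, OF summable_on_P_survival summable_on_P_survival])
  also have "\<dots> = infsum (\<lambda>z. P x z * (survival C m z - survival C (Suc m) z)) C"
    by (simp add: right_diff_distrib)
  also have "\<dots> = infsum (\<lambda>z. \<Sum>y\<in>-C. P x z * taboo P C (Suc m) z y) C"
    by (simp only: Suc.IH sum_distrib_left)
  also have "\<dots> = (\<Sum>y\<in>-C. infsum (\<lambda>z. P x z * taboo P C (Suc m) z y) C)"
    by (rule infsum_sum[OF assms summable_on_P_taboo])
  finally show ?case by simp
qed

lemma one_minus_survival:
  assumes "finite (- C)"
  shows "1 - survival C m x = (\<Sum>j<m. \<Sum>y\<in>-C. taboo P C (Suc j) x y)"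
  using sum_lessThan_telescope'[of "\<lambda>j. survival C j x" m] survival_diff[OF assms] by simp

end

section \<open>Hitting, excursions and the cycle formula\<close>

text \<open>Only recurrence is assumed: given a stationary distribution, positive recurrence
  adds nothing to the argument.\<close>
locale recurrent_chain = markov_chain P for P :: "'a \<Rightarrow> 'a \<Rightarrow> real" +
  fixes \<pi> :: "'a \<Rightarrow> real" and K :: "'a set"
  assumes irreducible: "irreducible_chain P"
    and recurrent: "\<And>x. (\<lambda>j. first_return P j x) sums 1"
    and stationary: "stationary_distribution P \<pi>"
    and finite_K: "finite K" and K_nonempty: "K \<noteq> {}"
begin

lemma survival_return_tendsto_0: "(\<lambda>m. survival (UNIV - {k}) m k) \<longlonglongrightarrow> 0"
proof -
  have "(\<lambda>j. first_return P (Suc j) k) sums 1"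
    using recurrent[of k] sums_Suc_iff[of "\<lambda>j. first_return P j k" 1]
    by (simp add: first_return_def)
  then have "(\<lambda>m. \<Sum>j<m. first_return P (Suc j) k) \<longlonglongrightarrow> 1"
    by (simp add: sums_def)
  moreover have "(\<Sum>j<m. first_return P (Suc j) k) = 1 - survival (UNIV - {k}) m k" for m
    using one_minus_survival[of "UNIV - {k}" m k] by (simp add: first_return_def)
  ultimately have "(\<lambda>m. 1 - (1 - survival (UNIV - {k}) m k)) \<longlonglongrightarrow> 1 - 1"
    by (intro tendsto_diff tendsto_const) simp
  then show ?thesis by simp
qed

lemma taboo_reach:
  assumes "x \<noteq> k"
  shows "\<exists>j. 0 < taboo P (UNIV - {k}) (Suc j) k x"
proof -
  define C where "C = UNIV - {k}"
  have "a = x \<or> (\<exists>j. 0 < taboo P C (Suc j) a x) \<or> (\<exists>j. 0 < taboo P C (Suc j) k x)"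
    if "(a, x) \<in> {(a, b). 0 < P a b}\<^sup>*" for a
    using that
  proof (induction rule: converse_rtrancl_induct)
    case (step a b)
    then have P_ab: "0 < P a b" by simp
    from step.IH show ?case
    proof (elim disjE exE)
      assume "b = x"
      then have "0 < taboo P C (Suc 0) a x" using P_ab by simp
      then show ?case by blast
    next
      fix j assume j: "0 < taboo P C (Suc j) b x"
      show ?case
      proof (cases "b = k")
        case False
        then have "P a b * taboo P C (Suc j) b x \<le> taboo P C (Suc (Suc j)) a x"
          by (intro P_taboo_le_taboo) (simp add: C_def)
        moreover have "0 < P a b * taboo P C (Suc j) b x" using P_ab j by simp
        ultimately show ?thesis by (metis less_le_trans)
      qed (use j in blast)
    qed blast
  qed simp
  moreover have "(k, x) \<in> {(a, b). 0 < P a b}\<^sup>*"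
    using irreducible unfolding irreducible_chain_def by blast
  ultimately show ?thesis
    using assms by (auto simp: C_def)
qed

lemma survival_tendsto_0: "(\<lambda>m. survival (UNIV - {k}) m x) \<longlonglongrightarrow> 0"
proof (cases "x = k")
  case True
  then show ?thesis using survival_return_tendsto_0 by simp
next
  case False
  obtain j where t_pos: "0 < taboo P (UNIV - {k}) (Suc j) k x"
    using taboo_reach[OF False] by blast
  define t where "t = taboo P (UNIV - {k}) (Suc j) k x"
  have bound: "survival (UNIV - {k}) m x \<le> survival (UNIV - {k}) (m + Suc j) k / t" for m
  proof -
    have "t * survival (UNIV - {k}) m x \<le> survival (UNIV - {k}) (Suc j + m) k"
      unfolding t_def using False by (intro taboo_mult_survival_le) auto
    then show ?thesis
      using t_pos by (simp add: t_def pos_le_divide_eq mult.commute add.commute)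
  qed
  have lim: "(\<lambda>m. survival (UNIV - {k}) (m + Suc j) k / t) \<longlonglongrightarrow> 0"
    using LIMSEQ_ignore_initial_segment[OF survival_return_tendsto_0] by (rule tendsto_divide_zero)
  show ?thesis
    by (rule real_tendsto_sandwich[OF _ _ tendsto_const lim]) (use survival_nonneg bound in auto)
qed

lemma survival_avoid_K_tendsto_0: "(\<lambda>m. survival (UNIV - K) m x) \<longlonglongrightarrow> 0"
proof -
  obtain k where "k \<in> K" using K_nonempty by blast
  then have "survival (UNIV - K) m x \<le> survival (UNIV - {k}) m x" for m
    by (intro survival_mono) auto
  then show ?thesis
    by (intro real_tendsto_sandwich[OF _ _ tendsto_const survival_tendsto_0[of k x]])
      (use survival_nonneg in auto)
qed

lemma hitting_sums_1: "(\<lambda>j. \<Sum>y\<in>K. taboo P (UNIV - K) j x y) sums 1"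
proof -
  have "(\<Sum>j<m. \<Sum>y\<in>K. taboo P (UNIV - K) (Suc j) x y) = 1 - survival (UNIV - K) m x" for m
    using one_minus_survival[of "UNIV - K" m x] finite_K by simp
  moreover have "(\<lambda>m. 1 - survival (UNIV - K) m x) \<longlonglongrightarrow> 1 - 0"
    by (intro tendsto_intros survival_avoid_K_tendsto_0)
  ultimately have "(\<lambda>j. \<Sum>y\<in>K. taboo P (UNIV - K) (Suc j) x y) sums 1"
    by (simp add: sums_def)
  then show ?thesis
    using sums_Suc_iff[of "\<lambda>j. \<Sum>y\<in>K. taboo P (UNIV - K) j x y" 1] by simp
qed

lemma pi_nonneg: "0 \<le> \<pi> x"
  using stationary unfolding stationary_distribution_def by auto

lemma pi_has_sum: "(\<pi> has_sum 1) UNIV"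
  using stationary unfolding stationary_distribution_def by auto

lemma pi_summable_on: "\<pi> summable_on S"
  using summable_on_subset_banach[OF has_sum_imp_summable[OF pi_has_sum]] by blast

lemma pi_stationary: "((\<lambda>x. \<pi> x * P x y) has_sum \<pi> y) UNIV"
  using stationary unfolding stationary_distribution_def by auto

lemma pi_mult_P_le: "\<pi> a * P a b \<le> \<pi> b"
  using finite_sum_le_has_sum[OF pi_stationary, of "{a}"] pi_nonneg P_nonneg by auto

lemma pi_pos: "0 < \<pi> x"
proof -
  have "\<pi> \<noteq> (\<lambda>_. 0)"
  proof
    assume "\<pi> = (\<lambda>_. 0)"
    then have "(\<pi> has_sum 0) UNIV" by simp
    then show False using pi_has_sum has_sum_unique by fastforce
  qed
  then obtain x0 where x0: "0 < \<pi> x0"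
    using pi_nonneg by (meson dual_order.order_iff_strict ext)
  have "(x0, x) \<in> {(a, b). 0 < P a b}\<^sup>*"
    using irreducible unfolding irreducible_chain_def by blast
  then show ?thesis
  proof (induction rule: rtrancl_induct)
    case (step b c)
    then have "0 < \<pi> b * P b c" by simp
    then show ?case using pi_mult_P_le[of b c] by linarith
  qed (rule x0)
qed

lemma sum_pi_K_pos: "0 < (\<Sum>k\<in>K. \<pi> k)"
  using finite_K K_nonempty pi_pos by (simp add: sum_pos)

lemma infsum_split_K:
  fixes f :: "'a \<Rightarrow> real"
  assumes "f summable_on UNIV"
  shows "infsum f UNIV = sum f K + infsum f (UNIV - K)"
  using infsum_Un_disjoint[of f K "UNIV - K"] summable_on_subset_banach[OF assms] finite_K by simp

lemma summable_on_pi_taboo: "(\<lambda>x. \<pi> x * taboo P C j x y) summable_on S"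
  by (rule summable_on_abs_le[OF pi_summable_on])
    (use pi_nonneg taboo_bounds[of C j _ y] in \<open>auto simp: abs_mult mult_left_le\<close>)

text \<open>\<open>avoiding_mass m y\<close> is the probability, under the stationary law, of
  \<open>X\<^sub>0, ..., X\<^sub>m \<notin> K\<close> and \<open>X\<^sub>m\<^sub>+\<^sub>1 = y\<close>.\<close>
definition avoiding_mass :: "nat \<Rightarrow> 'a \<Rightarrow> real" where
  "avoiding_mass m y = infsum (\<lambda>x. \<pi> x * taboo P (UNIV - K) (Suc m) x y) (UNIV - K)"

lemma avoiding_mass_nonneg: "0 \<le> avoiding_mass m y"
  unfolding avoiding_mass_def by (rule infsum_nonneg) (simp add: pi_nonneg taboo_nonneg)

lemma avoiding_mass_Suc:
  "avoiding_mass m y = (\<Sum>k\<in>K. \<pi> k * taboo P (UNIV - K) (Suc (Suc m)) k y) + avoiding_mass (Suc m) y"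
proof -
  define f where "f x z = \<pi> z * P z x * taboo P (UNIV - K) (Suc m) x y" for x z
  have f_has_sum: "(f x has_sum \<pi> x * taboo P (UNIV - K) (Suc m) x y) UNIV" for x
    unfolding f_def by (rule has_sum_cmult_left[OF pi_stationary])
  have "(\<lambda>p. f (fst p) (snd p)) summable_on Sigma (UNIV - K) (\<lambda>_. UNIV)"
  proof (rule summable_on_SigmaI)
    show "((\<lambda>z. f (fst (x, z)) (snd (x, z))) has_sum \<pi> x * taboo P (UNIV - K) (Suc m) x y) UNIV"
      for x using f_has_sum by simp
    show "0 \<le> f (fst (x, z)) (snd (x, z))" for x z
      by (simp add: f_def pi_nonneg P_nonneg taboo_nonneg)
  qed (rule summable_on_pi_taboo)
  then have "(\<lambda>(x, z). f x z) summable_on (UNIV - K) \<times> UNIV"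
    by (simp add: case_prod_unfold)
  then have "avoiding_mass m y = infsum (\<lambda>z. infsum (\<lambda>x. f x z) (UNIV - K)) UNIV"
    unfolding avoiding_mass_def infsumI[OF f_has_sum, symmetric] by (rule infsum_swap_banach)
  also have "\<dots> = infsum (\<lambda>z. \<pi> z * taboo P (UNIV - K) (Suc (Suc m)) z y) UNIV"
    by (simp add: f_def mult.assoc infsum_cmult_right')
  also have "\<dots> = (\<Sum>k\<in>K. \<pi> k * taboo P (UNIV - K) (Suc (Suc m)) k y) + avoiding_mass (Suc m) y"
    unfolding avoiding_mass_def by (rule infsum_split_K[OF summable_on_pi_taboo])
  finally show ?thesis .
qed

lemma stationary_excursion_decomposition:
  "\<pi> y = (\<Sum>k\<in>K. \<pi> k * (\<Sum>j<Suc (Suc m). taboo P (UNIV - K) j k y)) + avoiding_mass m y"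
proof (induction m)
  case 0
  have "\<pi> y = infsum (\<lambda>x. \<pi> x * P x y) UNIV"
    by (rule infsumI[OF pi_stationary, symmetric])
  also have "\<dots> = (\<Sum>k\<in>K. \<pi> k * P k y) + infsum (\<lambda>x. \<pi> x * P x y) (UNIV - K)"
    by (rule infsum_split_K[OF has_sum_imp_summable[OF pi_stationary]])
  finally show ?case
    unfolding avoiding_mass_def by (simp add: numeral_2_eq_2)
next
  case (Suc m)
  let ?t = "\<lambda>j k. taboo P (UNIV - K) j k y"
  have "\<pi> y = (\<Sum>k\<in>K. \<pi> k * (\<Sum>j<Suc (Suc m). ?t j k))
      + ((\<Sum>k\<in>K. \<pi> k * ?t (Suc (Suc m)) k) + avoiding_mass (Suc m) y)"
    using Suc avoiding_mass_Suc[of m y] by linarith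
  also have "\<dots> = (\<Sum>k\<in>K. \<pi> k * (\<Sum>j<Suc (Suc m). ?t j k) + \<pi> k * ?t (Suc (Suc m)) k)
      + avoiding_mass (Suc m) y"
    by (simp only: sum.distrib add.assoc)
  also have "\<dots> = (\<Sum>k\<in>K. \<pi> k * (\<Sum>j<Suc (Suc (Suc m)). ?t j k)) + avoiding_mass (Suc m) y"
    by (simp add: distrib_left)
  finally show ?case .
qed

lemma avoiding_mass_tendsto_0: "(\<lambda>m. avoiding_mass m y) \<longlonglongrightarrow> 0"
proof -
  define bound where "bound m = infsum (\<lambda>x. \<pi> x * survival (UNIV - K) m x) (UNIV - K)" for m
  have "avoiding_mass m y \<le> bound m" for m
    unfolding avoiding_mass_def bound_def
  proof (rule infsum_mono[OF summable_on_pi_taboo])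
    show "(\<lambda>x. \<pi> x * survival (UNIV - K) m x) summable_on UNIV - K"
      by (rule summable_on_abs_le[OF pi_summable_on])
        (use pi_nonneg survival_bounds in \<open>auto simp: abs_mult mult_left_le\<close>)
    show "\<pi> x * taboo P (UNIV - K) (Suc m) x y \<le> \<pi> x * survival (UNIV - K) m x" for x
      using taboo_le_survival pi_nonneg by (simp add: mult_left_mono)
  qed
  moreover have "bound \<longlonglongrightarrow> infsum (\<lambda>x. \<pi> x * 0) (UNIV - K)"
    unfolding bound_def
  proof (rule infsum_tendsto_dominated[OF pi_summable_on])
    show "\<bar>\<pi> x * survival (UNIV - K) n x\<bar> \<le> \<pi> x" for n x
      using pi_nonneg survival_bounds[of "UNIV - K" n x] by (simp add: abs_mult mult_left_le)
    show "(\<lambda>n. \<pi> x * survival (UNIV - K) n x) \<longlonglongrightarrow> \<pi> x * 0" for x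
      by (intro tendsto_mult tendsto_const survival_avoid_K_tendsto_0)
  qed
  then have "bound \<longlonglongrightarrow> 0" by simp
  ultimately show ?thesis
    by (intro real_tendsto_sandwich[OF _ _ tendsto_const \<open>bound \<longlonglongrightarrow> 0\<close>])
      (auto simp: avoiding_mass_nonneg)
qed

lemma summable_taboo_from_K:
  assumes k: "k \<in> K"
  shows "summable (\<lambda>j. taboo P (UNIV - K) j k y)"
proof (rule summableI_nonneg_bounded)
  show "0 \<le> taboo P (UNIV - K) j k y" for j
    by (rule taboo_nonneg)
  fix n
  have "\<pi> k * (\<Sum>j<Suc (Suc n). taboo P (UNIV - K) j k y)
      \<le> (\<Sum>k'\<in>K. \<pi> k' * (\<Sum>j<Suc (Suc n). taboo P (UNIV - K) j k' y))"
    by (rule member_le_sum[OF k _ finite_K]) (simp add: pi_nonneg taboo_nonneg sum_nonneg)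
  also have "\<dots> \<le> \<pi> y"
    using stationary_excursion_decomposition[of y n] avoiding_mass_nonneg[of n y] by linarith
  finally have "(\<Sum>j<Suc (Suc n). taboo P (UNIV - K) j k y) \<le> \<pi> y / \<pi> k"
    using pi_pos[of k] by (simp add: field_simps)
  moreover have "(\<Sum>j<n. taboo P (UNIV - K) j k y) \<le> (\<Sum>j<Suc (Suc n). taboo P (UNIV - K) j k y)"
    by (rule sum_mono2) (auto simp: taboo_nonneg)
  ultimately show "(\<Sum>j<n. taboo P (UNIV - K) j k y) \<le> \<pi> y / \<pi> k"
    by linarith
qed

lemma summable_taboo_to_K:
  assumes "y \<in> K"
  shows "summable (\<lambda>j. taboo P (UNIV - K) j x y)"
proof (rule summable_comparison_test'[OF sums_summable[OF hitting_sums_1[of x]]])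
  show "norm (taboo P (UNIV - K) j x y) \<le> (\<Sum>y\<in>K. taboo P (UNIV - K) j x y)" for j
    using member_le_sum[OF assms, of "taboo P (UNIV - K) j x"] finite_K by (simp add: taboo_nonneg)
qed

text \<open>\<open>green A x y\<close> is the expected number of visits to \<open>y\<close> at times \<open>1, ..., \<tau>\<close>, where \<open>\<tau>\<close>
  is the first time \<open>X\<close> leaves \<open>A - K\<close>; for \<open>y \<in> K\<close> it is \<open>Gmat P K A x y\<close>.\<close>
definition green :: "'a set \<Rightarrow> 'a \<Rightarrow> 'a \<Rightarrow> real" where
  "green A x y = (\<Sum>j. taboo P (A - K) j x y)"

lemma summable_taboo:
  assumes "x \<in> K \<or> y \<in> K"
  shows "summable (\<lambda>j. taboo P (A - K) j x y)"
proof (rule summable_comparison_test')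
  show "summable (\<lambda>j. taboo P (UNIV - K) j x y)"
    using assms summable_taboo_from_K summable_taboo_to_K by blast
  show "norm (taboo P (A - K) j x y) \<le> taboo P (UNIV - K) j x y" for j
    by (simp add: taboo_nonneg taboo_mono Diff_mono)
qed

lemma summable_taboo_Suc:
  assumes "x \<in> K \<or> y \<in> K"
  shows "summable (\<lambda>j. taboo P (A - K) (Suc j) x y)"
  using summable_taboo[OF assms] summable_Suc_iff[of "\<lambda>j. taboo P (A - K) j x y"] by simp

lemma suminf_taboo_Suc:
  assumes "x \<in> K \<or> y \<in> K"
  shows "(\<Sum>j. taboo P (A - K) (Suc j) x y) = green A x y"
  using suminf_split_head[OF summable_taboo[OF assms]] by (simp add: green_def)

lemma green_nonneg: "x \<in> K \<or> y \<in> K \<Longrightarrow> 0 \<le> green A x y"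
  unfolding green_def by (intro suminf_nonneg summable_taboo) (auto simp: taboo_nonneg)

lemma green_le_green_UNIV: "x \<in> K \<or> y \<in> K \<Longrightarrow> green A x y \<le> green UNIV x y"
  unfolding green_def by (intro suminf_le summable_taboo taboo_mono) auto

lemma taboo_le_green:
  assumes "x \<in> K \<or> y \<in> K"
  shows "taboo P (A - K) j x y \<le> green A x y"
  unfolding green_def using sum_le_suminf[OF summable_taboo[OF assms, of A], of "{j}"]
  by (simp add: taboo_nonneg)

lemma green_UNIV_sum_K: "(\<Sum>k\<in>K. green UNIV x k) = 1"
proof -
  have "(\<Sum>k\<in>K. green UNIV x k) = (\<Sum>j. \<Sum>k\<in>K. taboo P (UNIV - K) j x k)"
    unfolding green_def by (rule suminf_sum[symmetric]) (simp add: summable_taboo)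
  then show ?thesis
    using sums_unique[OF hitting_sums_1] by simp
qed

lemma cycle_formula: "\<pi> y = (\<Sum>k\<in>K. \<pi> k * green UNIV k y)"
proof -
  define s where "s m = (\<Sum>k\<in>K. \<pi> k * (\<Sum>j<Suc (Suc m). taboo P (UNIV - K) j k y))" for m
  have "s = (\<lambda>m. \<pi> y - avoiding_mass m y)"
    unfolding s_def by (intro ext) (metis stationary_excursion_decomposition add_diff_cancel_right')
  moreover have "(\<lambda>m. \<pi> y - avoiding_mass m y) \<longlonglongrightarrow> \<pi> y - 0"
    by (intro tendsto_diff tendsto_const avoiding_mass_tendsto_0)
  ultimately have "s \<longlonglongrightarrow> \<pi> y"
    by simp
  moreover have "s \<longlonglongrightarrow> (\<Sum>k\<in>K. \<pi> k * green UNIV k y)"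
    unfolding s_def green_def
  proof (intro tendsto_sum tendsto_mult tendsto_const)
    fix k assume "k \<in> K"
    then have "(\<lambda>m. \<Sum>j<m. taboo P (UNIV - K) j k y) \<longlonglongrightarrow> (\<Sum>j. taboo P (UNIV - K) j k y)"
      by (intro summable_LIMSEQ summable_taboo) simp
    then show "(\<lambda>m. \<Sum>j<Suc (Suc m). taboo P (UNIV - K) j k y) \<longlonglongrightarrow> (\<Sum>j. taboo P (UNIV - K) j k y)"
      by (intro LIMSEQ_Suc)
  qed
  ultimately show ?thesis
    using LIMSEQ_unique by blast
qed

end

section \<open>Truncation to a finite set\<close>

locale truncation = recurrent_chain P \<pi> K for P :: "'a \<Rightarrow> 'a \<Rightarrow> real" and \<pi> K +
  fixes A :: "'a set"
  assumes finite_A: "finite A" and K_subset_A: "K \<subseteq> A"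
begin

abbreviation u :: "'a \<Rightarrow> real" where
  "u \<equiv> uhit P K A"

lemma Gmat_eq_green: "y \<in> K \<Longrightarrow> Gmat P K A x y = green A x y"
  by (simp add: Gmat_def green_def)

lemma uhit_eq: "u x = (\<Sum>k\<in>K. green A x k)"
  unfolding uhit_def Gmat_def green_def by simp

lemma uhit_nonneg: "0 \<le> u x"
  unfolding uhit_eq by (rule sum_nonneg) (simp add: green_nonneg)

lemma uhit_le_1: "u x \<le> 1"
proof -
  have "u x \<le> (\<Sum>k\<in>K. green UNIV x k)"
    unfolding uhit_eq by (rule sum_mono) (simp add: green_le_green_UNIV)
  then show ?thesis
    using green_UNIV_sum_K by simp
qed

lemma green_split:
  assumes "x \<in> K \<or> y \<in> K"
  shows "green A x y = P x y + (\<Sum>j. taboo P (A - K) (Suc (Suc j)) x y)"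
  using suminf_split_initial_segment[OF summable_taboo[OF assms, of A], of 2]
  by (simp add: green_def numeral_2_eq_2)

lemma green_first_step:
  assumes y: "y \<in> K"
  shows "green A x y = P x y + (\<Sum>z\<in>A - K. P x z * green A z y)"
proof -
  have "(\<Sum>j. taboo P (A - K) (Suc (Suc j)) x y) = (\<Sum>j. \<Sum>z\<in>A - K. P x z * taboo P (A - K) (Suc j) z y)"
    using finite_A by simp
  also have "\<dots> = (\<Sum>z\<in>A - K. \<Sum>j. P x z * taboo P (A - K) (Suc j) z y)"
    using y by (intro suminf_sum summable_mult summable_taboo_Suc) simp
  also have "\<dots> = (\<Sum>z\<in>A - K. P x z * green A z y)"
    using y by (simp add: suminf_mult summable_taboo_Suc suminf_taboo_Suc)
  finally show ?thesis
    using green_split y by simp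
qed

lemma green_last_step:
  assumes k: "k \<in> K"
  shows "green A k y = P k y + (\<Sum>x\<in>A - K. green A k x * P x y)"
proof -
  have "(\<Sum>j. taboo P (A - K) (Suc (Suc j)) k y) = (\<Sum>j. \<Sum>x\<in>A - K. taboo P (A - K) (Suc j) k x * P x y)"
    using taboo_last_step finite_A by simp
  also have "\<dots> = (\<Sum>x\<in>A - K. \<Sum>j. taboo P (A - K) (Suc j) k x * P x y)"
    using k by (intro suminf_sum summable_mult2 summable_taboo_Suc) simp
  also have "\<dots> = (\<Sum>x\<in>A - K. green A k x * P x y)"
    using k by (simp add: suminf_mult2[symmetric] summable_taboo_Suc suminf_taboo_Suc)
  finally show ?thesis
    using green_split k by simp
qed

lemma uhit_first_step: "u x = (\<Sum>k\<in>K. P x k) + (\<Sum>z\<in>A - K. P x z * u z)"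
proof -
  have "u x = (\<Sum>k\<in>K. P x k) + (\<Sum>k\<in>K. \<Sum>z\<in>A - K. P x z * green A z k)"
    unfolding uhit_eq by (simp add: green_first_step[of _ x] sum.distrib)
  also have "(\<Sum>k\<in>K. \<Sum>z\<in>A - K. P x z * green A z k) = (\<Sum>z\<in>A - K. P x z * u z)"
    by (subst sum.swap) (simp add: uhit_eq sum_distrib_left)
  finally show ?thesis .
qed

lemma P_mult_uhit_le: "z \<in> A - K \<Longrightarrow> P x z * u z \<le> u x"
  using uhit_first_step[of x] member_le_sum[of z "A - K" "\<lambda>z. P x z * u z"] finite_A
    sum_nonneg[of K "P x"] P_nonneg uhit_nonneg
  by (smt (verit) finite_Diff mult_nonneg_nonneg)

lemma P_le_uhit: "k \<in> K \<Longrightarrow> P x k \<le> u x"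
  using uhit_first_step[of x] member_le_sum[of k K "P x"] finite_K
    sum_nonneg[of "A - K" "\<lambda>z. P x z * u z"] P_nonneg uhit_nonneg
  by (smt (verit) mult_nonneg_nonneg)

lemma taboo_le_uhit: "k \<in> K \<Longrightarrow> taboo P (A - K) j x k \<le> u x"
  using taboo_le_green[of x k A j] member_le_sum[of k K "green A x"] finite_K green_nonneg
  unfolding uhit_eq by fastforce

lemma Rmat_nonneg: "0 \<le> Rmat P K A x y"
  unfolding Rmat_def using P_nonneg uhit_nonneg by simp

lemma Rmat_out: "y \<notin> Sprime P K A \<Longrightarrow> y \<notin> K \<Longrightarrow> Rmat P K A x y = 0"
  unfolding Rmat_def by simp

lemma Rmat_eq:
  assumes "x \<in> Sprime P K A" "y \<in> A"
  shows "Rmat P K A x y = (if y \<in> K then 1 else u y) * (P x y / u x)"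
  using assms uhit_nonneg[of y] unfolding Rmat_def Sprime_def by auto

lemma closed_class_stationary_eq:
  assumes cc: "closed_comm_class (Sprime P K A) (Rmat P K A) S2"
    and st: "stationary_on S2 (Rmat P K A) q" and K_S2: "K \<subseteq> S2"
    and y: "y \<in> A"
  shows "q y = (if y \<in> K then 1 else u y) * (\<Sum>x\<in>A. q x / u x * P x y)"
proof -
  have S2_sub: "S2 \<subseteq> Sprime P K A" and Sprime_sub: "Sprime P K A \<subseteq> A"
    using cc unfolding closed_comm_class_def Sprime_def by auto
  have q_out: "q x = 0" if "x \<notin> Sprime P K A" for x
    using st S2_sub that unfolding stationary_on_def by auto
  have "q y = (\<Sum>x\<in>A. q x * Rmat P K A x y)"
    by (rule stationary_on_closed_class_sum[OF cc st Rmat_nonneg _ finite_A])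
      (use Rmat_out K_S2 S2_sub Sprime_sub in auto)
  also have "\<dots> = (\<Sum>x\<in>A. (if y \<in> K then 1 else u y) * (q x / u x * P x y))"
  proof (rule sum.cong[OF refl])
    show "q x * Rmat P K A x y = (if y \<in> K then 1 else u y) * (q x / u x * P x y)" for x
      using Rmat_eq[OF _ y, of x] q_out[of x] by (cases "x \<in> Sprime P K A") auto
  qed
  finally show ?thesis
    by (simp add: sum_distrib_left)
qed

lemma taboo_exit_path:
  assumes "x \<in> A - K" "k \<in> K" "0 < taboo P (A - K) (Suc j) x k"
  shows "\<exists>x'. (x, x') \<in> {(a, b). a \<in> Sprime P K A - K \<and> b \<in> Sprime P K A - K \<and> 0 < P a b}\<^sup>*
    \<and> 0 < (\<Sum>k\<in>K. P x' k)"
  using assms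
proof (induction j arbitrary: x)
  case 0
  then have "0 < (\<Sum>k\<in>K. P x k)"
    using member_le_sum[OF 0(2), of "P x"] finite_K P_nonneg by fastforce
  then show ?case by blast
next
  case (Suc j)
  let ?E = "{(a, b). a \<in> Sprime P K A - K \<and> b \<in> Sprime P K A - K \<and> 0 < P a b}"
  have live: "w \<in> Sprime P K A - K" if "w \<in> A - K" "0 < taboo P (A - K) i w k" for w i
    using that less_le_trans[OF that(2) taboo_le_uhit[OF Suc.prems(2)]] by (simp add: Sprime_def)
  have "taboo P (A - K) (Suc (Suc j)) x k = (\<Sum>z\<in>A - K. P x z * taboo P (A - K) (Suc j) z k)"
    using finite_A by (simp only: taboo.simps infsum_finite finite_Diff)
  then have "\<exists>z\<in>A - K. 0 < P x z * taboo P (A - K) (Suc j) z k"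
    using Suc.prems(3) by (intro sum_pos_imp_ex_pos) simp
  then obtain z where z: "z \<in> A - K" "0 < P x z * taboo P (A - K) (Suc j) z k"
    by blast
  then have P_xz: "0 < P x z" and t_z: "0 < taboo P (A - K) (Suc j) z k"
    using P_nonneg[of x z] taboo_nonneg[of "A - K" "Suc j" z k] by (auto simp: zero_less_mult_iff)
  have "x \<in> Sprime P K A - K" "z \<in> Sprime P K A - K"
    using live Suc.prems z(1) t_z by blast+
  with P_xz have "(x, z) \<in> ?E" by simp
  moreover obtain x' where "(z, x') \<in> ?E\<^sup>*" "0 < (\<Sum>k\<in>K. P x' k)"
    using Suc.IH[OF z(1) Suc.prems(2) t_z] by blast
  ultimately show ?case
    by (meson converse_rtrancl_into_rtrancl)
qed

lemma exit_path:
  assumes "x \<in> A - K" "0 < u x"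
  shows "\<exists>x'. (x, x') \<in> {(a, b). a \<in> Sprime P K A - K \<and> b \<in> Sprime P K A - K \<and> 0 < P a b}\<^sup>*
    \<and> 0 < (\<Sum>k\<in>K. P x' k)"
proof -
  have "\<exists>k\<in>K. 0 < green A x k"
    using assms(2) unfolding uhit_eq by (rule sum_pos_imp_ex_pos)
  then obtain k where k: "k \<in> K" "0 < green A x k"
    by blast
  then have "\<exists>i. 0 < taboo P (A - K) i x k"
    unfolding green_def using suminf_pos_iff[OF summable_taboo[of x k A]] taboo_nonneg by simp
  then obtain i where "0 < taboo P (A - K) i x k"
    by blast
  moreover from this have "i \<noteq> 0" by (cases i) auto
  ultimately obtain j where "0 < taboo P (A - K) (Suc j) x k"
    by (metis not0_implies_Suc)
  then show ?thesis
    using taboo_exit_path assms(1) k(1) by blast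
qed

lemma P_eq_0_if_uhit_eq_0:
  assumes "u x = 0" and "y \<in> K \<or> y \<in> Sprime P K A - K"
  shows "P x y = 0"
  using assms(2)
proof
  assume "y \<in> K"
  then show ?thesis using P_le_uhit[of y x] P_nonneg[of x y] assms(1) by simp
next
  assume y: "y \<in> Sprime P K A - K"
  then have "P x y * u y \<le> 0" and "0 < u y"
    using P_mult_uhit_le[of y x] assms(1) by (auto simp: Sprime_def)
  then show ?thesis using P_nonneg[of x y] by (simp add: mult_le_0_iff)
qed

lemma sum_restrict_Sprime:
  assumes "\<And>x. x \<in> A - K \<Longrightarrow> u x = 0 \<Longrightarrow> f x = 0"
  shows "(\<Sum>x\<in>A - K. f x) = (\<Sum>x\<in>Sprime P K A - K. f x)"
proof (rule sum.mono_neutral_right)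
  show "\<forall>x\<in>A - K - (Sprime P K A - K). f x = 0"
  proof
    fix x assume "x \<in> A - K - (Sprime P K A - K)"
    then show "f x = 0"
      using uhit_nonneg[of x] by (intro assms) (auto simp: Sprime_def)
  qed
qed (use finite_A in \<open>auto simp: Sprime_def\<close>)

lemma green_weighted_last_step:
  "(\<Sum>k\<in>K. w k * green A k y)
    = (\<Sum>k\<in>K. w k * P k y) + (\<Sum>x\<in>A - K. (\<Sum>k\<in>K. w k * green A k x) * P x y)"
proof -
  have "(\<Sum>k\<in>K. w k * green A k y)
      = (\<Sum>k\<in>K. w k * P k y) + (\<Sum>k\<in>K. \<Sum>x\<in>A - K. w k * green A k x * P x y)"
    by (simp add: green_last_step[of _ y] distrib_left sum.distrib sum_distrib_left mult.assoc)
  also have "(\<Sum>k\<in>K. \<Sum>x\<in>A - K. w k * green A k x * P x y)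
      = (\<Sum>x\<in>A - K. (\<Sum>k\<in>K. w k * green A k x) * P x y)"
    by (subst sum.swap) (simp add: sum_distrib_right)
  finally show ?thesis .
qed

text \<open>The difference of two solutions is invariant for the restriction of \<open>P\<close> to
  \<open>Sprime P K A - K\<close>, from each state of which \<open>K\<close> is reachable.\<close>
lemma excursion_equation_unique:
  assumes w_eq: "\<And>y. y \<in> Sprime P K A - K \<Longrightarrow>
      w y = (\<Sum>k\<in>K. w k * P k y) + (\<Sum>x\<in>Sprime P K A - K. w x * P x y)"
    and y: "y \<in> Sprime P K A - K"
  shows "w y = (\<Sum>k\<in>K. w k * green A k y)"
proof -
  let ?B = "Sprime P K A - K"
  define z where "z y = (\<Sum>k\<in>K. w k * green A k y)" for y
  have z_eq: "z y = (\<Sum>k\<in>K. w k * P k y) + (\<Sum>x\<in>?B. z x * P x y)" if "y \<in> ?B" for y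
    using green_weighted_last_step[of w y] sum_restrict_Sprime[of "\<lambda>x. z x * P x y"]
      P_eq_0_if_uhit_eq_0 that
    by (simp add: z_def)
  have "w y - z y = 0"
  proof (rule invariant_vanishes[where Q = P and e = "\<lambda>x. \<Sum>k\<in>K. P x k" and h = u])
    show "finite ?B"
      using finite_A by (auto simp: Sprime_def)
    show "u x = (\<Sum>k\<in>K. P x k) + (\<Sum>y\<in>?B. P x y * u y)" for x
      using uhit_first_step[of x] sum_restrict_Sprime[of "\<lambda>y. P x y * u y"] by simp
    show "\<exists>x'. (x, x') \<in> {(a, b). a \<in> ?B \<and> b \<in> ?B \<and> 0 < P a b}\<^sup>* \<and> 0 < (\<Sum>k\<in>K. P x' k)"
      if "x \<in> ?B" for x
      using that exit_path by (auto simp: Sprime_def)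
    show "w y - z y = (\<Sum>x\<in>?B. (w x - z x) * P x y)" if "y \<in> ?B" for y
      using w_eq[OF that] z_eq[OF that] by (simp add: left_diff_distrib sum_subtractf)
  qed (use y P_nonneg uhit_nonneg in \<open>auto simp: sum_nonneg Sprime_def\<close>)
  then show ?thesis
    by (simp add: z_def)
qed

lemma closed_class_stationary_representation:
  assumes cc: "closed_comm_class (Sprime P K A) (Rmat P K A) S2"
    and st: "stationary_on S2 (Rmat P K A) q" and K_S2: "K \<subseteq> S2"
    and y: "y \<in> A"
  shows "q y = (if y \<in> K then 1 else u y) * (\<Sum>k\<in>K. q k / u k * green A k y)"
proof -
  let ?B = "Sprime P K A - K"
  define w where "w x = q x / u x" for x
  have stat: "q y = (if y \<in> K then 1 else u y) * (\<Sum>x\<in>A. w x * P x y)" if "y \<in> A" for y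
    unfolding w_def by (rule closed_class_stationary_eq[OF cc st K_S2 that])
  have split_A: "(\<Sum>x\<in>A. w x * P x y) = (\<Sum>k\<in>K. w k * P k y) + (\<Sum>x\<in>?B. w x * P x y)"
    if "y \<in> K \<or> y \<in> ?B" for y
    using sum.subset_diff[OF K_subset_A finite_A, of "\<lambda>x. w x * P x y"]
      sum_restrict_Sprime[of "\<lambda>x. w x * P x y"] P_eq_0_if_uhit_eq_0 that
    by (simp add: add.commute)
  have w_eq_green: "w y = (\<Sum>k\<in>K. w k * green A k y)" if "y \<in> ?B" for y
  proof (rule excursion_equation_unique)
    show "w y = (\<Sum>k\<in>K. w k * P k y) + (\<Sum>x\<in>?B. w x * P x y)" if "y \<in> ?B" for y
      using stat[of y] split_A[of y] that by (auto simp: w_def Sprime_def)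
  qed (rule that)
  consider "y \<in> K" | "y \<in> ?B" | "y \<in> A - K" "u y = 0"
    using y uhit_nonneg[of y] by (force simp: Sprime_def)
  then show ?thesis
  proof cases
    case 1
    have "q y = (\<Sum>k\<in>K. w k * P k y) + (\<Sum>x\<in>?B. w x * P x y)"
      using stat[OF y] split_A[of y] 1 by simp
    also have "(\<Sum>x\<in>?B. w x * P x y) = (\<Sum>x\<in>?B. (\<Sum>k\<in>K. w k * green A k x) * P x y)"
      using w_eq_green by (intro sum.cong) auto
    also have "(\<Sum>k\<in>K. w k * P k y) + \<dots> = (\<Sum>k\<in>K. w k * green A k y)"
      using green_weighted_last_step[of w y] sum_restrict_Sprime[of "\<lambda>x. (\<Sum>k\<in>K. w k * green A k x) * P x y"]
        P_eq_0_if_uhit_eq_0 1 by simp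
    finally show ?thesis
      using 1 by (simp add: w_def)
  next
    case 2
    then show ?thesis
      using w_eq_green[OF 2] by (auto simp: w_def Sprime_def field_simps)
  next
    case 3
    then show ?thesis
      using stat[OF y] by simp
  qed
qed

lemma irreducible_green_UNIV:
  assumes "irreducible_on K (Gmat P K A)"
  shows "irreducible_on K (green UNIV)"
proof -
  have "{(a, b). a \<in> K \<and> b \<in> K \<and> 0 < Gmat P K A a b} \<subseteq> {(a, b). a \<in> K \<and> b \<in> K \<and> 0 < green UNIV a b}"
  proof safe
    fix a b assume "a \<in> K" "b \<in> K" "0 < Gmat P K A a b"
    then show "0 < green UNIV a b"
      using green_le_green_UNIV[of a b A] Gmat_eq_green by simp
  qed
  then show ?thesis
    using assms trancl_mono unfolding irreducible_on_def by blast
qed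

end

section \<open>Convergence of the truncated chains\<close>

locale exhaustion = recurrent_chain P \<pi> K for P :: "'a \<Rightarrow> 'a \<Rightarrow> real" and \<pi> K +
  fixes A :: "nat \<Rightarrow> 'a set"
  assumes finite_A: "\<And>n. finite (A n)" and K_subset_A: "\<And>n. K \<subseteq> A n"
    and A_mono: "\<And>n. A n \<subseteq> A (Suc n)" and A_exhausts: "(\<Union>n. A n) = UNIV"
begin

lemma truncation: "truncation P \<pi> K (A n)"
  by unfold_locales (rule finite_A, rule K_subset_A)

lemma eventually_in_A: "\<forall>\<^sub>F n in sequentially. x \<in> A n"
proof -
  obtain N where "x \<in> A N"
    using A_exhausts by blast
  then have "x \<in> A n" if "N \<le> n" for n
    using lift_Suc_mono_le[of A, OF A_mono that] by blast
  then show ?thesis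
    unfolding eventually_sequentially by blast
qed

lemma taboo_tendsto: "(\<lambda>n. taboo P (A n - K) j x y) \<longlonglongrightarrow> taboo P (UNIV - K) j x y"
proof (induction j arbitrary: x rule: less_induct)
  case (less j)
  show ?case
  proof (cases "j < 2")
    case True
    then show ?thesis by (cases j) (auto simp: numeral_2_eq_2 less_Suc_eq)
  next
    case False
    then obtain i where j: "j = Suc (Suc i)" by (metis add_2_eq_Suc le_Suc_ex not_less)
    define f where "f n z = (if z \<in> A n then P x z * taboo P (A n - K) (Suc i) z y else 0)" for n z
    have "taboo P (A n - K) j x y = infsum (f n) (UNIV - K)" for n
      unfolding j taboo.simps by (rule infsum_cong_neutral) (auto simp: f_def)
    moreover have "(\<lambda>n. infsum (f n) (UNIV - K)) \<longlonglongrightarrow> infsum (\<lambda>z. P x z * taboo P (UNIV - K) (Suc i) z y) (UNIV - K)"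
    proof (rule infsum_tendsto_dominated[OF P_summable_on])
      show "\<bar>f n z\<bar> \<le> P x z" for n z
        using P_nonneg[of x z] taboo_bounds[of "A n - K" "Suc i" z y]
        by (auto simp: f_def abs_mult mult_left_le)
      show "(\<lambda>n. f n z) \<longlonglongrightarrow> P x z * taboo P (UNIV - K) (Suc i) z y" for z
      proof (rule Lim_transform_eventually)
        show "(\<lambda>n. P x z * taboo P (A n - K) (Suc i) z y) \<longlonglongrightarrow> P x z * taboo P (UNIV - K) (Suc i) z y"
          using j by (intro tendsto_mult tendsto_const less) simp
        show "\<forall>\<^sub>F n in sequentially. P x z * taboo P (A n - K) (Suc i) z y = f n z"
          using eventually_in_A[of z] by eventually_elim (simp add: f_def)
      qed
    qed
    ultimately show ?thesis
      using j by simp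
  qed
qed

lemma green_tendsto:
  assumes "x \<in> K \<or> y \<in> K"
  shows "(\<lambda>n. green (A n) x y) \<longlonglongrightarrow> green UNIV x y"
proof -
  have "(\<lambda>n. \<Sum>j. taboo P (A n - K) j x y) \<longlonglongrightarrow> (\<Sum>j. taboo P (UNIV - K) j x y)"
  proof (rule tannerys_theorem[where M = "\<lambda>j. taboo P (UNIV - K) j x y", THEN conjunct2, THEN conjunct2])
    show "\<forall>\<^sub>F (j, n) in at_top \<times>\<^sub>F sequentially. norm (taboo P (A n - K) j x y) \<le> taboo P (UNIV - K) j x y"
      by (rule always_eventually) (auto simp: taboo_nonneg intro: taboo_mono)
  qed (use taboo_tendsto summable_taboo[OF assms] in simp_all)
  then show ?thesis
    unfolding green_def .
qed

lemma uhit_tendsto_1: "(\<lambda>n. uhit P K (A n) x) \<longlonglongrightarrow> 1"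
proof -
  have "(\<lambda>n. \<Sum>k\<in>K. green (A n) x k) \<longlonglongrightarrow> (\<Sum>k\<in>K. green UNIV x k)"
    by (intro tendsto_sum green_tendsto) simp
  then show ?thesis
    using green_UNIV_sum_K truncation.uhit_eq[OF truncation] by simp
qed

end

locale truncated_stationary = exhaustion P \<pi> K A
  for P :: "'a \<Rightarrow> 'a \<Rightarrow> real" and \<pi> K and A :: "nat \<Rightarrow> 'a set" +
  fixes S2 :: "nat \<Rightarrow> 'a set" and q :: "nat \<Rightarrow> 'a \<Rightarrow> real"
  assumes green_irreducible: "irreducible_on K (green UNIV)"
    and K_subset_S2: "\<And>n. K \<subseteq> S2 n"
    and closed_class: "\<And>n. closed_comm_class (Sprime P K (A n)) (Rmat P K (A n)) (S2 n)"
    and stationary_q: "\<And>n. stationary_on (S2 n) (Rmat P K (A n)) (q n)"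
begin

definition excursion_weight :: "nat \<Rightarrow> 'a \<Rightarrow> real" where
  "excursion_weight n k = q n k / uhit P K (A n) k"

definition total_weight :: "nat \<Rightarrow> real" where
  "total_weight n = (\<Sum>k\<in>K. excursion_weight n k)"

definition weight :: "nat \<Rightarrow> 'a \<Rightarrow> real" where
  "weight n k = excursion_weight n k / total_weight n"

lemma S2_subset_A: "S2 n \<subseteq> A n"
  using closed_class[of n] unfolding closed_comm_class_def Sprime_def by auto

lemma q_nonneg: "0 \<le> q n y"
  using stationary_q[of n] unfolding stationary_on_def by auto

lemma q_out: "y \<notin> A n \<Longrightarrow> q n y = 0"
  using stationary_q[of n] S2_subset_A unfolding stationary_on_def by auto

lemma sum_q: "(\<Sum>y\<in>A n. q n y) = 1"
proof -
  have "(\<Sum>y\<in>A n. q n y) = (\<Sum>y\<in>S2 n. q n y)"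
    using stationary_q[of n] S2_subset_A finite_A
    by (intro sum.mono_neutral_right) (auto simp: stationary_on_def)
  then show ?thesis
    using stationary_q[of n] unfolding stationary_on_def by simp
qed

lemma uhit_K_pos: "k \<in> K \<Longrightarrow> 0 < uhit P K (A n) k"
  using K_subset_S2[of n] closed_class[of n] unfolding closed_comm_class_def Sprime_def by auto

lemma q_representation:
  assumes "y \<in> A n"
  shows "q n y = (if y \<in> K then 1 else uhit P K (A n) y)
    * (\<Sum>k\<in>K. excursion_weight n k * green (A n) k y)"
  unfolding excursion_weight_def
  by (rule truncation.closed_class_stationary_representation[OF truncation closed_class
        stationary_q K_subset_S2 assms])

lemma excursion_weight_nonneg: "0 \<le> excursion_weight n k"
  unfolding excursion_weight_def using q_nonneg truncation.uhit_nonneg[OF truncation] by simp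

lemma total_weight_pos: "0 < total_weight n"
proof (rule ccontr)
  assume "\<not> 0 < total_weight n"
  then have "total_weight n = 0"
    using sum_nonneg[of K "excursion_weight n"] excursion_weight_nonneg
    unfolding total_weight_def by force
  then have "\<forall>k\<in>K. excursion_weight n k = 0"
    using sum_nonneg_eq_0_iff[OF finite_K excursion_weight_nonneg] unfolding total_weight_def by simp
  then have "q n y = 0" if "y \<in> A n" for y
    using q_representation[OF that] by simp
  then show False
    using sum_q[of n] by simp
qed

lemma weight_nonneg: "0 \<le> weight n k"
  unfolding weight_def using excursion_weight_nonneg total_weight_pos[of n] by simp

lemma weight_sum: "(\<Sum>k\<in>K. weight n k) = 1"
  using total_weight_pos[of n] unfolding weight_def total_weight_def
  by (simp add: sum_divide_distrib[symmetric])

lemma sum_weight_mult: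
  "(\<Sum>k\<in>K. weight n k * f k) = (\<Sum>k\<in>K. excursion_weight n k * f k) / total_weight n"
  by (simp add: weight_def sum_divide_distrib)

lemma weight_invariant:
  assumes y: "y \<in> K"
  shows "weight n y * uhit P K (A n) y = (\<Sum>k\<in>K. weight n k * Gmat P K (A n) k y)"
proof -
  have "excursion_weight n y * uhit P K (A n) y = q n y"
    using uhit_K_pos[OF y, of n] by (simp add: excursion_weight_def)
  also have "\<dots> = (\<Sum>k\<in>K. excursion_weight n k * Gmat P K (A n) k y)"
    using q_representation[of y n] K_subset_A y truncation.Gmat_eq_green[OF truncation] by auto
  finally have "excursion_weight n y * uhit P K (A n) y
      = (\<Sum>k\<in>K. excursion_weight n k * Gmat P K (A n) k y)" .
  then show ?thesis
    unfolding sum_weight_mult by (simp add: weight_def)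
qed

lemma weight_tendsto:
  assumes "k \<in> K"
  shows "(\<lambda>n. weight n k) \<longlonglongrightarrow> \<pi> k / (\<Sum>k\<in>K. \<pi> k)"
proof (rule invariant_tendsto[OF finite_K K_nonempty weight_nonneg weight_sum weight_invariant _
      uhit_tendsto_1 _ green_irreducible pi_pos cycle_formula assms])
  show "(\<lambda>n. Gmat P K (A n) k y) \<longlonglongrightarrow> green UNIV k y" if "k \<in> K" "y \<in> K" for k y
    using green_tendsto[of k y] that truncation.Gmat_eq_green[OF truncation] by simp
  show "0 \<le> green UNIV k y" if "k \<in> K" "y \<in> K" for k y
    using green_nonneg that by simp
qed

lemma scaled_q_eq:
  assumes "y \<in> A n"
  shows "q n y / total_weight n
    = (if y \<in> K then 1 else uhit P K (A n) y) * (\<Sum>k\<in>K. weight n k * green (A n) k y)"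
  using q_representation[OF assms] by (simp add: sum_weight_mult)

lemma scaled_q_tendsto: "(\<lambda>n. q n y / total_weight n) \<longlonglongrightarrow> \<pi> y / (\<Sum>k\<in>K. \<pi> k)"
proof -
  define h where "h n = (if y \<in> K then 1 else uhit P K (A n) y)" for n
  have "h \<longlonglongrightarrow> 1"
    unfolding h_def using uhit_tendsto_1 by (cases "y \<in> K") simp_all
  moreover have "(\<lambda>n. \<Sum>k\<in>K. weight n k * green (A n) k y)
      \<longlonglongrightarrow> (\<Sum>k\<in>K. \<pi> k / (\<Sum>k\<in>K. \<pi> k) * green UNIV k y)"
    by (intro tendsto_sum tendsto_mult weight_tendsto green_tendsto) simp_all
  ultimately have "(\<lambda>n. h n * (\<Sum>k\<in>K. weight n k * green (A n) k y))
      \<longlonglongrightarrow> 1 * (\<Sum>k\<in>K. \<pi> k / (\<Sum>k\<in>K. \<pi> k) * green UNIV k y)"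
    by (rule tendsto_mult)
  also have "1 * (\<Sum>k\<in>K. \<pi> k / (\<Sum>k\<in>K. \<pi> k) * green UNIV k y) = \<pi> y / (\<Sum>k\<in>K. \<pi> k)"
    using cycle_formula[of y] by (simp add: sum_divide_distrib[symmetric])
  finally show ?thesis
  proof (rule Lim_transform_eventually)
    show "\<forall>\<^sub>F n in sequentially. h n * (\<Sum>k\<in>K. weight n k * green (A n) k y) = q n y / total_weight n"
      using eventually_in_A[of y] by eventually_elim (simp add: h_def scaled_q_eq)
  qed
qed

lemma scaled_q_bound: "\<bar>q n y / total_weight n\<bar> \<le> \<pi> y / Min (\<pi> ` K)"
proof -
  define m where "m = Min (\<pi> ` K)"
  have m_pos: "0 < m" and m_le: "\<And>k. k \<in> K \<Longrightarrow> m \<le> \<pi> k"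
    using finite_K K_nonempty pi_pos by (auto simp: m_def)
  show ?thesis
  proof (cases "y \<in> A n")
    case False
    then show ?thesis
      using q_out pi_nonneg m_pos by (simp add: m_def)
  next
    case True
    have sum_nonneg: "0 \<le> (\<Sum>k\<in>K. weight n k * green (A n) k y)"
      by (intro sum_nonneg mult_nonneg_nonneg weight_nonneg green_nonneg) simp
    have "0 \<le> uhit P K (A n) y" "uhit P K (A n) y \<le> 1"
      using truncation.uhit_nonneg[OF truncation] truncation.uhit_le_1[OF truncation] by auto
    then have "q n y / total_weight n \<le> (\<Sum>k\<in>K. weight n k * green (A n) k y)"
      unfolding scaled_q_eq[OF True] using sum_nonneg by (simp add: mult_left_le_one_le)
    also have "\<dots> \<le> (\<Sum>k\<in>K. \<pi> k / m * green UNIV k y)"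
    proof (rule sum_mono)
      fix k assume k: "k \<in> K"
      have "weight n k \<le> 1"
        using member_le_sum[OF k, of "weight n"] weight_nonneg weight_sum finite_K by simp
      also have "1 \<le> \<pi> k / m"
        using m_le[OF k] m_pos by simp
      finally have "weight n k \<le> \<pi> k / m" .
      moreover have "green (A n) k y \<le> green UNIV k y" "0 \<le> green (A n) k y"
        using k green_le_green_UNIV green_nonneg by auto
      ultimately show "weight n k * green (A n) k y \<le> \<pi> k / m * green UNIV k y"
        using weight_nonneg pi_nonneg[of k] m_pos by (intro mult_mono) auto
    qed
    also have "\<dots> = \<pi> y / m"
      using cycle_formula[of y] by (simp add: sum_divide_distrib[symmetric])
    finally show ?thesis
      using q_nonneg[of n y] total_weight_pos[of n] by (simp add: m_def)
  qed
qed

lemma total_weight_tendsto: "total_weight \<longlonglongrightarrow> (\<Sum>k\<in>K. \<pi> k)"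
proof -
  define S where "S = (\<Sum>k\<in>K. \<pi> k)"
  have S_pos: "0 < S"
    unfolding S_def by (rule sum_pi_K_pos)
  have summable_pi_div: "(\<lambda>y. \<pi> y / c) summable_on UNIV" for c
    using summable_on_cmult_left[OF pi_summable_on, of "inverse c"] by (simp add: divide_inverse)
  have "(\<lambda>n. infsum (\<lambda>y. q n y / total_weight n) UNIV) \<longlonglongrightarrow> infsum (\<lambda>y. \<pi> y / S) UNIV"
    unfolding S_def by (rule infsum_tendsto_dominated[OF summable_pi_div scaled_q_bound scaled_q_tendsto])
  moreover have "infsum (\<lambda>y. q n y / total_weight n) UNIV = 1 / total_weight n" for n
  proof -
    have "infsum (\<lambda>y. q n y / total_weight n) UNIV = infsum (\<lambda>y. q n y / total_weight n) (A n)"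
      by (rule infsum_cong_neutral) (auto simp: q_out)
    also have "\<dots> = (\<Sum>y\<in>A n. q n y) / total_weight n"
      using finite_A by (simp add: sum_divide_distrib)
    finally show ?thesis
      using sum_q by simp
  qed
  moreover have "infsum (\<lambda>y. \<pi> y / S) UNIV = 1 / S"
    using infsum_cmult_left'[of \<pi> "inverse S" UNIV] infsumI[OF pi_has_sum]
    by (simp add: divide_inverse)
  ultimately have "(\<lambda>n. 1 / total_weight n) \<longlonglongrightarrow> 1 / S"
    by simp
  then have "(\<lambda>n. inverse (1 / total_weight n)) \<longlonglongrightarrow> inverse (1 / S)"
    by (rule tendsto_inverse) (use S_pos in simp)
  then show ?thesis
    by (simp add: S_def)
qed

lemma q_tendsto: "(\<lambda>n. q n x) \<longlonglongrightarrow> \<pi> x"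
proof -
  have "(\<lambda>n. total_weight n * (q n x / total_weight n)) \<longlonglongrightarrow> (\<Sum>k\<in>K. \<pi> k) * (\<pi> x / (\<Sum>k\<in>K. \<pi> k))"
    by (intro tendsto_mult total_weight_tendsto scaled_q_tendsto)
  moreover have "(\<lambda>n. total_weight n * (q n x / total_weight n)) = (\<lambda>n. q n x)"
  proof
    show "total_weight n * (q n x / total_weight n) = q n x" for n
      using total_weight_pos[of n] by simp
  qed
  moreover have "(\<Sum>k\<in>K. \<pi> k) * (\<pi> x / (\<Sum>k\<in>K. \<pi> k)) = \<pi> x"
    using sum_pi_K_pos by simp
  ultimately show ?thesis
    by simp
qed

end

theorem theorem5p2:
  fixes P :: "'a::countable \<Rightarrow> 'a \<Rightarrow> real"
    and \<pi> :: "'a \<Rightarrow> real"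
    and K :: "'a set"
    and A :: "nat \<Rightarrow> 'a set"
    and S2 :: "nat \<Rightarrow> 'a set"
    and \<pi>3 :: "nat \<Rightarrow> 'a \<Rightarrow> real"
  assumes "stochastic P"
    and "irreducible_chain P"
    and "positive_recurrent P"
    and "stationary_distribution P \<pi>"
    and "finite K" and "K \<noteq> {}"
    and "\<And>n. finite (A n)"
    and "\<And>n. K \<subseteq> A n"
    and "\<And>n. A n \<subseteq> A (Suc n)"
    and "(\<Union>n. A n) = UNIV"
    and "\<And>n. irreducible_on K (Gmat P K (A n))"
    and "\<And>n. K \<subseteq> S2 n"
    and "\<And>n. closed_comm_class (Sprime P K (A n)) (Rmat P K (A n)) (S2 n)"
    and "\<And>n. stationary_on (S2 n) (Rmat P K (A n)) (\<pi>3 n)"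
  shows "\<And>x. (\<lambda>n. \<pi>3 n x) \<longlonglongrightarrow> \<pi> x"
proof -
  have "\<And>x. (\<lambda>j. first_return P j x) sums 1"
    using assms(3) unfolding positive_recurrent_def by blast
  then interpret exhaustion P \<pi> K A
    using assms(1,2,4-10) by unfold_locales
  have "irreducible_on K (green UNIV)"
    using truncation.irreducible_green_UNIV[OF truncation assms(11)[of 0]] .
  then interpret truncated_stationary P \<pi> K A S2 \<pi>3
    using assms(12-14) by unfold_locales
  show "\<And>x. (\<lambda>n. \<pi>3 n x) \<longlonglongrightarrow> \<pi> x"
    by (rule q_tendsto)
qed

end
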